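(* Consider the patient model in the context with actions chosen by any non-anticipating (possibly randomized) policy. Let $\lambda_2>0$ and $\delta\in(0,1)$. Then with probability at least $1-\delta$, for all $t\geq1$ and all $i=1,\dots,M$ simultaneously, $|\hat\mu_{i,t}-\mu^*_i|\leq\alpha^\mu_{i,t}(\delta)$, where $$\alpha^\mu_{i,t}(\delta):=\frac{e^{3\bar\mu}}{\sqrt{H_t(\hat\mu_{i,t})}}\Big[\frac{\sqrt{\lambda_2}}{2}+\frac{2}{\sqrt{\lambda_2}}\Big(\bar\mu+\log\Big(\frac{2M\sqrt{H_t(\hat\mu_{i,t})}}{\delta\sqrt{\lambda_2}}\Big)\Big)\Big]+\frac{e^{2\bar\mu}\lambda_2\bar\mu}{H_t(\hat\mu_{i,t})},$$ $$H_t(\hat\mu_{i,t}):=\lambda_2+\sum_{s=1}^{t-1}\mathbf 1_{\{u_s=e_i\}}\sigma'(x_s+\hat\mu_{i,t}).$$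
   Context: Patient model: $M\geq1$ treatments; $\mathcal U:=\{v\in\{0,1\}^M:\|v\|_0\leq1\}$, $e_i$ the $i$-th basis vector. State: $x_{t+1}=ax_t+b^\top u_t+c^\top d_t+w_t$, adherence $d^i_t\mid x_t,u^i_t\sim\mathrm{Bernoulli}(u^i_t\sigma(x_t+\mu_i))$, $\sigma$ the sigmoid, $x_1$ distributed as the noise. Parameters: $a\in[0,\bar a]$, known $\bar a\in(0,1)$, $\|b\|_\infty\leq\bar b$, $\|c\|_\infty\leq\bar c$, true shifts $\mu^*\in[-\bar\mu,\bar\mu]^M$ with known $\bar\mu>0$. $x_t,u_t,d_t$ fully observed; $u_t$ depends only on the observed history up to $x_t$ and independent randomization. Noise i.i.d., zero-symmetric, $\sigma_s^2$-subgaussian, bounded by $\bar w>0$, log-concave density, known variance. Estimator: $\hat\mu_{i,t}$ is the projection onto $[-\bar\mu,\bar\mu]$ of $\hat\mu^{MLE}_{i,t}:=\arg\max_{\mu_i\in\mathbb R}\sum_{s=1}^{t-1}\mathbf 1_{\{u_s=e_i\}}[d^i_s\log\sigma(x_s+\mu_i)+(1-d^i_s)\log(1-\sigma(x_s+\mu_i))]-\frac{\lambda_2}{2}\mu_i^2$. *)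

theory Defs
  imports "HOL-Probability.Probability"
begin

text \<open>Treatments are indexed by 1..M. Action / adherence vectors are functions nat => real,
  zero outside {1..M}.\<close>

definition sigmoid :: "real \<Rightarrow> real" where
  "sigmoid z = 1 / (1 + exp (- z))"

definition sigmoid' :: "real \<Rightarrow> real" where
  "sigmoid' z = sigmoid z * (1 - sigmoid z)"

definition basis_vec :: "nat \<Rightarrow> (nat \<Rightarrow> real)" where
  "basis_vec i = (\<lambda>j. if j = i then 1 else 0)"

definition action_set :: "nat \<Rightarrow> (nat \<Rightarrow> real) set" where
  "action_set M = {v. (\<forall>j. v j \<in> {0, 1}) \<and> (\<forall>j. j \<notin> {1..M} \<longrightarrow> v j = 0)
                      \<and> card {j. v j \<noteq> 0} \<le> 1}"

definition pen_loglik ::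
  "real \<Rightarrow> (nat \<Rightarrow> real) \<Rightarrow> (nat \<Rightarrow> nat \<Rightarrow> real) \<Rightarrow> (nat \<Rightarrow> nat \<Rightarrow> real)
     \<Rightarrow> nat \<Rightarrow> nat \<Rightarrow> real \<Rightarrow> real" where
  "pen_loglik lam2 xs us ds i t m =
     (\<Sum>s\<in>{1..<t}. (if us s = basis_vec i then 1 else 0) *
        (ds s i * ln (sigmoid (xs s + m)) + (1 - ds s i) * ln (1 - sigmoid (xs s + m))))
     - lam2 / 2 * m\<^sup>2"

definition mu_mle ::
  "real \<Rightarrow> (nat \<Rightarrow> real) \<Rightarrow> (nat \<Rightarrow> nat \<Rightarrow> real) \<Rightarrow> (nat \<Rightarrow> nat \<Rightarrow> real)
     \<Rightarrow> nat \<Rightarrow> nat \<Rightarrow> real" where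
  "mu_mle lam2 xs us ds i t =
     (SOME m. \<forall>m'. pen_loglik lam2 xs us ds i t m' \<le> pen_loglik lam2 xs us ds i t m)"

definition mu_hat ::
  "real \<Rightarrow> real \<Rightarrow> (nat \<Rightarrow> real) \<Rightarrow> (nat \<Rightarrow> nat \<Rightarrow> real) \<Rightarrow> (nat \<Rightarrow> nat \<Rightarrow> real)
     \<Rightarrow> nat \<Rightarrow> nat \<Rightarrow> real" where
  "mu_hat mubar lam2 xs us ds i t = max (- mubar) (min mubar (mu_mle lam2 xs us ds i t))"

definition H_info ::
  "real \<Rightarrow> (nat \<Rightarrow> real) \<Rightarrow> (nat \<Rightarrow> nat \<Rightarrow> real) \<Rightarrow> nat \<Rightarrow> nat \<Rightarrow> real \<Rightarrow> real" where
  "H_info lam2 xs us i t m =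
     lam2 + (\<Sum>s\<in>{1..<t}. (if us s = basis_vec i then 1 else 0) * sigmoid' (xs s + m))"

definition alpha_mu ::
  "nat \<Rightarrow> real \<Rightarrow> real \<Rightarrow> real \<Rightarrow> (nat \<Rightarrow> real) \<Rightarrow> (nat \<Rightarrow> nat \<Rightarrow> real)
     \<Rightarrow> (nat \<Rightarrow> nat \<Rightarrow> real) \<Rightarrow> nat \<Rightarrow> nat \<Rightarrow> real" where
  "alpha_mu M mubar lam2 \<delta> xs us ds i t =
     (let H = H_info lam2 xs us i t (mu_hat mubar lam2 xs us ds i t) in
       exp (3 * mubar) / sqrt H *
         (sqrt lam2 / 2 + 2 / sqrt lam2 *
            (mubar + ln (2 * real M * sqrt H / (\<delta> * sqrt lam2))))
       + exp (2 * mubar) * lam2 * mubar / H)"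

definition log_concave :: "(real \<Rightarrow> real) \<Rightarrow> bool" where
  "log_concave f = (\<forall>x y \<theta>. 0 < \<theta> \<and> \<theta> < 1 \<longrightarrow>
      f x powr \<theta> * f y powr (1 - \<theta>) \<le> f (\<theta> * x + (1 - \<theta>) * y))"

end

theory Submission
  imports Defs
begin

text \<open>
  Fix a treatment i. Let S(t) be the sum over s < t of 1{u(s) = e(i)} (d(s) - sigmoid (x(s) + mu*(i)))
  and V(t) the corresponding sum of sigmoid' (x(s) + mu*(i)). The increments of S are centred
  Bernoulli variables whose conditional variances are the increments of V, so for |xi| <= 1 the
  process exp (xi S(t) - xi^2 V(t)) is a nonnegative supermartingale, and so is its mixture over
  xi in [-1, 1] with weight exp (- lam2 xi^2). Ville's maximal inequality bounds the mixture
  uniformly in t with probability 1 - delta/M, and a Laplace-type lower bound on the mixture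
  turns this into |S(t)| <= conf_radius lam2 (delta/M) (lam2 + V(t)).

  The rest is deterministic. Put G m = lam2 m + (sum of 1{u(s) = e(i)} sigmoid (x(s) + m)). The
  first-order condition of the penalised likelihood gives G(mle) - G(mu*) = S(t) - lam2 mu*. As G is
  increasing and the projected estimate mu_hat lies between mu* and mle, |G(mu_hat) - G(mu*)| is at
  most |S(t)| + lam2 mubar. The inequality sigmoid' z >= exp (-|z - w|) sigmoid' w bounds the slope of
  G between mu* and mu_hat from below by exp (-2 mubar) H_t(mu_hat), and it also gives
  lam2 + V(t) <= exp (2 mubar) H_t(mu_hat). A union bound over the M treatments concludes.
\<close>

section \<open>The logistic function\<close>

lemma sigmoid_pos: "0 < sigmoid z"
  by (simp add: sigmoid_def add_pos_pos)

lemma sigmoid_less_1: "sigmoid z < 1"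
  by (simp add: sigmoid_def add_pos_pos)

lemma sigmoid_mono: "a \<le> b \<Longrightarrow> sigmoid a \<le> sigmoid b"
  unfolding sigmoid_def by (intro divide_left_mono) (auto intro!: mult_pos_pos add_pos_pos)

lemma sigmoid'_pos: "0 < sigmoid' z"
  unfolding sigmoid'_def using sigmoid_pos[of z] sigmoid_less_1[of z] by simp

lemma sigmoid_has_real_derivative: "(sigmoid has_real_derivative sigmoid' z) (at z)"
proof -
  have "0 < 1 + exp (- z)" by (simp add: add_pos_pos)
  then have "((\<lambda>z. 1 / (1 + exp (- z))) has_real_derivative sigmoid' z) (at z)"
    by (auto intro!: derivative_eq_intros simp: sigmoid'_def sigmoid_def field_simps power2_eq_square)
  then show ?thesis by (simp add: sigmoid_def[abs_def])
qed

lemma ln_sigmoid_has_real_derivative: "((\<lambda>z. ln (sigmoid z)) has_real_derivative 1 - sigmoid z) (at z)"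
  using DERIV_chain2[OF DERIV_ln_divide[OF sigmoid_pos[of z]] sigmoid_has_real_derivative[of z]]
    sigmoid_pos[of z]
  by (simp add: sigmoid'_def)

lemma ln_one_minus_sigmoid_has_real_derivative:
  "((\<lambda>z. ln (1 - sigmoid z)) has_real_derivative - sigmoid z) (at z)"
proof -
  have "0 < 1 - sigmoid z" using sigmoid_less_1[of z] by simp
  then show ?thesis
    using DERIV_chain2[OF DERIV_ln_divide[of "1 - sigmoid z"]
        DERIV_diff[OF DERIV_const sigmoid_has_real_derivative[of z]]]
    by (simp add: sigmoid'_def)
qed

lemma sigmoid'_exp_half: "sigmoid' z = 1 / (exp (z / 2) + exp (- z / 2))\<^sup>2"
proof -
  have "0 < 1 + exp (- z)" by (simp add: add_pos_pos)
  then have "sigmoid' z = exp (- z) / (1 + exp (- z))\<^sup>2"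
    by (simp add: sigmoid'_def sigmoid_def field_simps power2_eq_square)
  moreover have "(exp (z / 2) + exp (- z / 2))\<^sup>2 = exp z * (1 + exp (- z))\<^sup>2"
    by (simp add: power2_eq_square algebra_simps flip: exp_add)
  ultimately show ?thesis
    by (simp add: exp_minus inverse_eq_divide divide_divide_eq_left)
qed

lemma sigmoid'_ge_exp_neg_dist: "exp (- \<bar>z - w\<bar>) * sigmoid' w \<le> sigmoid' z"
proof -
  define b where "b = z - w"
  have pos: "0 < exp (v / 2) + exp (- v / 2)" for v :: real
    by (simp add: add_pos_pos)
  have "exp (z / 2) + exp (- z / 2) = exp (b / 2) * exp (w / 2) + exp (- b / 2) * exp (- w / 2)"
    by (simp add: b_def field_simps flip: exp_add)
  also have "\<dots> \<le> exp (\<bar>b\<bar> / 2) * (exp (w / 2) + exp (- w / 2))"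
    by (simp add: distrib_left) (intro add_mono mult_right_mono; simp)
  finally have "(exp (z / 2) + exp (- z / 2))\<^sup>2 \<le> (exp (\<bar>b\<bar> / 2) * (exp (w / 2) + exp (- w / 2)))\<^sup>2"
    using pos[of z] by (intro power_mono) auto
  also have "\<dots> = exp \<bar>b\<bar> * (exp (w / 2) + exp (- w / 2))\<^sup>2"
    by (simp add: power_mult_distrib power2_eq_square flip: exp_add)
  finally have "1 / (exp \<bar>b\<bar> * (exp (w / 2) + exp (- w / 2))\<^sup>2) \<le> 1 / (exp (z / 2) + exp (- z / 2))\<^sup>2"
    using pos[of z] pos[of w] by (intro divide_left_mono) (auto intro!: mult_pos_pos)
  then show ?thesis
    by (simp add: sigmoid'_exp_half b_def exp_minus inverse_eq_divide divide_divide_eq_left)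
qed

text \<open>Multiplying by \<open>b - a\<close> on both sides makes the bound hold whatever the sign of \<open>b - a\<close>.\<close>

lemma sigmoid_increment_ge:
  "exp (- \<bar>b - a\<bar>) * sigmoid' a * (b - a)\<^sup>2 \<le> (b - a) * (sigmoid b - sigmoid a)"
proof -
  obtain z where z: "\<bar>z - a\<bar> \<le> \<bar>b - a\<bar>" and diff: "sigmoid b - sigmoid a = (b - a) * sigmoid' z"
  proof (cases a b rule: linorder_cases)
    case less
    then obtain z where "a < z" "z < b" "sigmoid b - sigmoid a = (b - a) * sigmoid' z"
      using MVT2[OF less, of sigmoid sigmoid'] sigmoid_has_real_derivative by blast
    then show ?thesis by (intro that[of z]) auto
  next
    case greater
    then obtain z where "b < z" "z < a" "sigmoid a - sigmoid b = (a - b) * sigmoid' z"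
      using MVT2[OF greater, of sigmoid sigmoid'] sigmoid_has_real_derivative by blast
    then show ?thesis by (intro that[of z]) (auto simp: algebra_simps)
  qed (use that in simp)
  have "exp (- \<bar>b - a\<bar>) * sigmoid' a \<le> exp (- \<bar>z - a\<bar>) * sigmoid' a"
    using z sigmoid'_pos[of a] by (intro mult_right_mono) auto
  also have "\<dots> \<le> sigmoid' z"
    by (rule sigmoid'_ge_exp_neg_dist)
  finally have "exp (- \<bar>b - a\<bar>) * sigmoid' a * (b - a)\<^sup>2 \<le> sigmoid' z * (b - a)\<^sup>2"
    by (rule mult_right_mono) simp
  then show ?thesis
    by (simp add: diff power2_eq_square mult_ac)
qed

section \<open>Mixtures of exponential tilts\<close>

definition trunc_gauss :: "real \<Rightarrow> real \<Rightarrow> ennreal" where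
  "trunc_gauss r H = (\<integral>\<^sup>+\<eta>. ennreal (indicator {-r..r} \<eta> * exp (- H * \<eta>\<^sup>2)) \<partial>lborel)"

definition tilt_mixture :: "real \<Rightarrow> real \<Rightarrow> ennreal" where
  "tilt_mixture S H = (\<integral>\<^sup>+\<xi>. ennreal (indicator {-1..1} \<xi> * exp (\<xi> * S - \<xi>\<^sup>2 * H)) \<partial>lborel)"

lemma borel_measurable_tilt_mixture [measurable (raw)]:
  assumes [measurable]: "S \<in> borel_measurable N" "V \<in> borel_measurable N"
  shows "(\<lambda>\<omega>. tilt_mixture (S \<omega>) (V \<omega>)) \<in> borel_measurable N"
  unfolding tilt_mixture_def by measurable

lemma tilt_mixture_0: "tilt_mixture 0 H = trunc_gauss 1 H"
  unfolding tilt_mixture_def trunc_gauss_def by (simp add: mult.commute)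

lemma (in prob_space) nn_integral_tilt_mixture:
  assumes [measurable]: "S \<in> borel_measurable M" "V \<in> borel_measurable M" "A \<in> events"
  shows "(\<integral>\<^sup>+\<omega>. tilt_mixture (S \<omega>) (V \<omega>) * indicator A \<omega> \<partial>M)
       = (\<integral>\<^sup>+\<xi>. indicator {-1..1} \<xi>
          * (\<integral>\<^sup>+\<omega>. ennreal (exp (\<xi> * S \<omega> - \<xi>\<^sup>2 * V \<omega>)) * indicator A \<omega> \<partial>M) \<partial>lborel)"
proof -
  interpret pair_sigma_finite lborel M ..
  have "(\<integral>\<^sup>+\<omega>. tilt_mixture (S \<omega>) (V \<omega>) * indicator A \<omega> \<partial>M)
      = (\<integral>\<^sup>+\<omega>. (\<integral>\<^sup>+\<xi>. ennreal (indicator {-1..1} \<xi> * exp (\<xi> * S \<omega> - \<xi>\<^sup>2 * V \<omega>))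
      * indicator A \<omega> \<partial>lborel) \<partial>M)"
    unfolding tilt_mixture_def by (intro nn_integral_cong nn_integral_multc[symmetric]) auto
  also have "\<dots> = (\<integral>\<^sup>+\<xi>. (\<integral>\<^sup>+\<omega>. ennreal (indicator {-1..1} \<xi> * exp (\<xi> * S \<omega> - \<xi>\<^sup>2 * V \<omega>))
      * indicator A \<omega> \<partial>M) \<partial>lborel)"
    by (rule Fubini') measurable
  also have "\<dots> = (\<integral>\<^sup>+\<xi>. indicator {-1..1} \<xi>
      * (\<integral>\<^sup>+\<omega>. ennreal (exp (\<xi> * S \<omega> - \<xi>\<^sup>2 * V \<omega>)) * indicator A \<omega> \<partial>M) \<partial>lborel)"
    by (intro nn_integral_cong) (auto simp: indicator_def intro!: nn_integral_cong)
  finally show ?thesis .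
qed

lemma trunc_gauss_scale:
  assumes "k > 0"
  shows "trunc_gauss r H = ennreal k * trunc_gauss (r / k) (H * k\<^sup>2)"
proof -
  have "trunc_gauss r H
      = ennreal \<bar>k\<bar> * (\<integral>\<^sup>+x. ennreal (indicator {-r..r} (0 + k * x) * exp (- H * (0 + k * x)\<^sup>2)) \<partial>lborel)"
    unfolding trunc_gauss_def using assms by (intro nn_integral_real_affine) auto
  also have "(\<lambda>x. indicator {-r..r} (0 + k * x) * exp (- H * (0 + k * x)\<^sup>2))
      = (\<lambda>x. indicator {-(r / k)..r / k} x * exp (- (H * k\<^sup>2) * x\<^sup>2) :: real)"
  proof
    fix x
    have "k * x \<in> {-r..r} \<longleftrightarrow> x \<in> {-(r / k)..r / k}"
      using assms by (auto simp: field_simps)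
    then show "indicator {-r..r} (0 + k * x) * exp (- H * (0 + k * x)\<^sup>2)
        = indicator {-(r / k)..r / k} x * exp (- (H * k\<^sup>2) * x\<^sup>2)"
      by (simp add: indicator_def power_mult_distrib algebra_simps)
  qed
  finally show ?thesis using assms by (simp add: trunc_gauss_def)
qed

lemma trunc_gauss_mono:
  assumes "r \<le> r'" "H' \<le> H"
  shows "trunc_gauss r H \<le> trunc_gauss r' H'"
  unfolding trunc_gauss_def using assms
  by (intro nn_integral_mono) (auto simp: indicator_def mult_right_mono)

lemma trunc_gauss_pos: "0 < trunc_gauss 1 H"
proof -
  have "ennreal (exp (- \<bar>H\<bar>)) * 2 = (\<integral>\<^sup>+\<eta>. ennreal (exp (- \<bar>H\<bar>)) * indicator {-1..1::real} \<eta> \<partial>lborel)"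
    by (simp add: nn_integral_cmult_indicator)
  also have "\<dots> \<le> trunc_gauss 1 H"
  proof (unfold trunc_gauss_def, intro nn_integral_mono)
    fix \<eta> :: real
    have "H * \<eta>\<^sup>2 \<le> \<bar>H\<bar>" if "\<eta> \<in> {-1..1}"
    proof -
      have "\<eta>\<^sup>2 \<le> 1" using that by (simp add: abs_square_le_1 abs_le_iff)
      then have "\<bar>H\<bar> * \<eta>\<^sup>2 \<le> \<bar>H\<bar>" by (simp add: mult_left_le)
      moreover have "H * \<eta>\<^sup>2 \<le> \<bar>H\<bar> * \<eta>\<^sup>2" by (simp add: mult_right_mono)
      ultimately show ?thesis by linarith
    qed
    then show "ennreal (exp (- \<bar>H\<bar>)) * indicator {-1..1} \<eta> \<le> ennreal (indicator {-1..1} \<eta> * exp (- H * \<eta>\<^sup>2))"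
      by (auto simp: indicator_def)
  qed
  finally show ?thesis
    by (rule less_le_trans[rotated]) (simp add: ennreal_zero_less_mult_iff)
qed

lemma trunc_gauss_finite: "0 \<le> H \<Longrightarrow> trunc_gauss 1 H < \<infinity>"
proof -
  assume "0 \<le> H"
  then have "trunc_gauss 1 H \<le> (\<integral>\<^sup>+\<eta>. indicator {-1..1::real} \<eta> \<partial>lborel)"
    unfolding trunc_gauss_def by (intro nn_integral_mono) (auto simp: indicator_def)
  then show ?thesis by (simp add: le_less_trans)
qed

lemma trunc_gauss_le_sqrt_ratio:
  assumes "0 < lam" "lam \<le> H"
  shows "trunc_gauss 1 lam \<le> ennreal (2 * sqrt (H / lam)) * trunc_gauss (1/2) H"
proof -
  define k where "k = min 1 (sqrt (4 * lam / H))"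
  have k: "0 < k" "k \<le> 1" "H * k\<^sup>2 \<le> 4 * lam"
    using assms by (auto simp: k_def min_def)
  have "2 / k \<le> 2 * sqrt (H / lam)"
  proof (cases "k = 1")
    case False
    then have "k = sqrt (4 * lam / H)" by (simp add: k_def min_def split: if_splits)
    then have "2 / k = sqrt (H / lam)"
      using assms k(1) by (simp add: real_sqrt_divide real_sqrt_mult field_simps)
    then show ?thesis using assms by simp
  qed (use assms in simp)
  have "trunc_gauss 1 lam = ennreal 2 * trunc_gauss (1/2) (4 * lam)"
    using trunc_gauss_scale[of 2 1 lam] by (simp add: mult.commute)
  also have "\<dots> = ennreal (2 / k) * (ennreal k * trunc_gauss (1/2) (4 * lam))"
    using k by (simp add: mult.assoc[symmetric] ennreal_mult[symmetric])
  also have "\<dots> \<le> ennreal (2 / k) * (ennreal k * trunc_gauss (1/2 / k) (H * k\<^sup>2))"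
    using k by (intro mult_left_mono trunc_gauss_mono) (auto simp: field_simps)
  also have "\<dots> = ennreal (2 / k) * trunc_gauss (1/2) H"
    using trunc_gauss_scale[OF k(1), of "1/2" H] by simp
  also have "\<dots> \<le> ennreal (2 * sqrt (H / lam)) * trunc_gauss (1/2) H"
    using \<open>2 / k \<le> _\<close> by (intro mult_right_mono ennreal_leI) auto
  finally show ?thesis .
qed

lemma trunc_gauss_le_tilted:
  "trunc_gauss (1/2) H
     \<le> (\<integral>\<^sup>+\<eta>. ennreal (indicator {-1/2..1/2} \<eta> * exp (a * \<eta> - H * \<eta>\<^sup>2)) \<partial>lborel)"
  (is "_ \<le> ?K a")
proof -
  have "?K a = ennreal \<bar>-1\<bar> * (\<integral>\<^sup>+\<eta>. ennreal (indicator {-1/2..1/2} (0 + -1 * \<eta>)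
                  * exp (a * (0 + -1 * \<eta>) - H * (0 + -1 * \<eta>)\<^sup>2)) \<partial>lborel)"
    by (intro nn_integral_real_affine) auto
  also have "\<dots> = ?K (- a)"
    by (auto intro!: nn_integral_cong simp: indicator_def)
  finally have reflect: "?K a = ?K (- a)" .
  have "ennreal 2 * trunc_gauss (1/2) H
      = (\<integral>\<^sup>+\<eta>. ennreal (indicator {-1/2..1/2} \<eta> * (2 * exp (- H * \<eta>\<^sup>2))) \<partial>lborel)"
    unfolding trunc_gauss_def
    by (subst nn_integral_cmult[symmetric]) (auto intro!: nn_integral_cong simp: ennreal_mult indicator_def)
  also have "\<dots> \<le> (\<integral>\<^sup>+\<eta>. ennreal (indicator {-1/2..1/2} \<eta> * exp (a * \<eta> - H * \<eta>\<^sup>2))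
                    + ennreal (indicator {-1/2..1/2} \<eta> * exp (- a * \<eta> - H * \<eta>\<^sup>2)) \<partial>lborel)"
  proof (intro nn_integral_mono)
    fix \<eta> :: real
    have "0 \<le> (exp (a * \<eta> / 2) - exp (- (a * \<eta>) / 2))\<^sup>2" by simp
    then have "2 \<le> exp (a * \<eta>) + exp (- (a * \<eta>))"
      by (simp add: power2_eq_square algebra_simps flip: exp_add)
    then have "2 * exp (- H * \<eta>\<^sup>2) \<le> exp (a * \<eta> - H * \<eta>\<^sup>2) + exp (- a * \<eta> - H * \<eta>\<^sup>2)"
      by (simp add: exp_diff exp_minus field_simps)
    then show "ennreal (indicator {-1/2..1/2} \<eta> * (2 * exp (- H * \<eta>\<^sup>2)))
        \<le> ennreal (indicator {-1/2..1/2} \<eta> * exp (a * \<eta> - H * \<eta>\<^sup>2))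
          + ennreal (indicator {-1/2..1/2} \<eta> * exp (- a * \<eta> - H * \<eta>\<^sup>2))"
      by (auto simp: indicator_def simp flip: ennreal_plus)
  qed
  also have "\<dots> = ?K a + ?K (- a)"
    by (intro nn_integral_add) auto
  also have "\<dots> = ennreal 2 * ?K a"
    using reflect by (simp add: mult_2)
  finally show ?thesis
    by (simp add: ennreal_mult_le_mult_iff)
qed

lemma exp_tilt_le_tilt_mixture:
  assumes "\<bar>\<theta>\<bar> \<le> 1/2" "0 < lam" "lam \<le> H"
  shows "ennreal (exp (\<theta> * S - \<theta>\<^sup>2 * H)) * trunc_gauss 1 lam
           \<le> ennreal (2 * sqrt (H / lam)) * tilt_mixture S H"
proof -
  let ?E = "ennreal (exp (\<theta> * S - \<theta>\<^sup>2 * H))"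
  \<comment> \<open>complete the square at \<open>\<theta>\<close>: \<open>\<xi> S - \<xi>\<^sup>2 H = \<theta> S - \<theta>\<^sup>2 H + (S - 2 \<theta> H) (\<xi> - \<theta>) - H (\<xi> - \<theta>)\<^sup>2\<close>\<close>
  have "?E * trunc_gauss (1/2) H
      \<le> ?E * (\<integral>\<^sup>+\<eta>. ennreal (indicator {-1/2..1/2} \<eta> * exp ((S - 2 * \<theta> * H) * \<eta> - H * \<eta>\<^sup>2)) \<partial>lborel)"
    by (intro mult_left_mono trunc_gauss_le_tilted) auto
  also have "\<dots> = (\<integral>\<^sup>+\<eta>. ennreal (indicator {\<theta>-1/2..\<theta>+1/2} (\<theta> + 1 * \<eta>)
                        * exp ((\<theta> + 1 * \<eta>) * S - (\<theta> + 1 * \<eta>)\<^sup>2 * H)) \<partial>lborel)"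
    by (subst nn_integral_cmult[symmetric])
      (auto intro!: nn_integral_cong simp: ennreal_mult[symmetric] indicator_def
        power2_eq_square algebra_simps simp flip: exp_add)
  also have "\<dots> = (\<integral>\<^sup>+\<xi>. ennreal (indicator {\<theta>-1/2..\<theta>+1/2} \<xi> * exp (\<xi> * S - \<xi>\<^sup>2 * H)) \<partial>lborel)"
    using nn_integral_real_affine[where c = 1 and t = \<theta>,
        of "\<lambda>\<xi>. ennreal (indicator {\<theta>-1/2..\<theta>+1/2} \<xi> * exp (\<xi> * S - \<xi>\<^sup>2 * H))"]
    by simp
  also have "\<dots> \<le> tilt_mixture S H"
    unfolding tilt_mixture_def using assms(1)
    by (intro nn_integral_mono) (auto simp: indicator_def)
  finally have shifted: "?E * trunc_gauss (1/2) H \<le> tilt_mixture S H" .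
  have "?E * trunc_gauss 1 lam \<le> ?E * (ennreal (2 * sqrt (H / lam)) * trunc_gauss (1/2) H)"
    using assms by (intro mult_left_mono trunc_gauss_le_sqrt_ratio) auto
  also have "\<dots> \<le> ennreal (2 * sqrt (H / lam)) * tilt_mixture S H"
    using shifted by (simp add: mult.left_commute mult_left_mono)
  finally show ?thesis .
qed

definition conf_radius :: "real \<Rightarrow> real \<Rightarrow> real \<Rightarrow> real" where
  "conf_radius lam \<delta> H = sqrt H * (sqrt lam / 2 + 2 / sqrt lam * ln (2 * sqrt H / (\<delta> * sqrt lam)))"

lemma abs_le_conf_radius:
  assumes lam: "0 < lam" "lam \<le> H"
    and tilt: "\<And>\<theta>. \<bar>\<theta>\<bar> \<le> 1/2 \<Longrightarrow> \<theta> * S - \<theta>\<^sup>2 * H < ln (2 * sqrt H / (\<delta> * sqrt lam))"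
  shows "\<bar>S\<bar> \<le> conf_radius lam \<delta> H"
proof -
  define L where "L = ln (2 * sqrt H / (\<delta> * sqrt lam))"
  define \<theta> where "\<theta> = sqrt lam / (2 * sqrt H)"
  have \<theta>: "0 < \<theta>" "\<theta> \<le> 1/2"
    using lam by (auto simp: \<theta>_def field_simps)
  have "\<theta> * \<bar>S\<bar> < \<theta>\<^sup>2 * H + L"
    using tilt[of \<theta>] tilt[of "- \<theta>"] \<theta> by (auto simp: L_def abs_if)
  also have "\<dots> = \<theta> * conf_radius lam \<delta> H"
    using lam by (simp add: conf_radius_def L_def \<theta>_def power2_eq_square field_simps)
  finally show ?thesis
    using \<theta>(1) by simp
qed

lemma abs_le_conf_radius_of_tilt_mixture:
  assumes lam: "0 < lam" "lam \<le> H" and \<delta>: "0 < \<delta>"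
    and J: "trunc_gauss 1 lam = ennreal J" "0 < J"
    and small: "tilt_mixture S H < ennreal (J / \<delta>)"
  shows "\<bar>S\<bar> \<le> conf_radius lam \<delta> H"
proof (rule abs_le_conf_radius[OF lam])
  fix \<theta> :: real
  assume \<theta>: "\<bar>\<theta>\<bar> \<le> 1/2"
  define r where "r = 2 * sqrt (H / lam)"
  have r: "0 < r" using lam by (simp add: r_def)
  have "ennreal (exp (\<theta> * S - \<theta>\<^sup>2 * H) * J) \<le> ennreal r * tilt_mixture S H"
    using exp_tilt_le_tilt_mixture[OF \<theta> lam, of S] J by (simp add: r_def ennreal_mult)
  also have "\<dots> < ennreal r * ennreal (J / \<delta>)"
    using r small by (intro ennreal_mult_strict_left_mono) auto
  also have "\<dots> = ennreal (r / \<delta> * J)"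
    using r J \<delta> by (simp add: ennreal_mult[symmetric])
  finally have "exp (\<theta> * S - \<theta>\<^sup>2 * H) * J < r / \<delta> * J"
    using r J \<delta> by (simp add: ennreal_less_iff)
  then have "exp (\<theta> * S - \<theta>\<^sup>2 * H) < r / \<delta>"
    using J(2) \<delta> by (simp add: field_simps)
  then have "ln (exp (\<theta> * S - \<theta>\<^sup>2 * H)) < ln (r / \<delta>)"
    using r \<delta> by (subst ln_less_cancel_iff) auto
  then show "\<theta> * S - \<theta>\<^sup>2 * H < ln (2 * sqrt H / (\<delta> * sqrt lam))"
    by (simp add: r_def real_sqrt_divide ac_simps)
qed

lemma conf_radius_mono:
  assumes lam: "0 < lam" "lam \<le> H" and H: "H \<le> H'" and \<delta>: "0 < \<delta>" "\<delta> \<le> 2"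
  shows "conf_radius lam \<delta> H \<le> conf_radius lam \<delta> H'"
proof -
  have "\<delta> * sqrt lam \<le> 2 * sqrt H"
    using lam \<delta> by (intro mult_mono) auto
  then have "1 \<le> 2 * sqrt H / (\<delta> * sqrt lam)"
    using lam \<delta> by simp
  moreover have "2 * sqrt H / (\<delta> * sqrt lam) \<le> 2 * sqrt H' / (\<delta> * sqrt lam)"
    using H lam \<delta> by (intro divide_right_mono) auto
  ultimately have "0 \<le> ln (2 * sqrt H / (\<delta> * sqrt lam))"
    "ln (2 * sqrt H / (\<delta> * sqrt lam)) \<le> ln (2 * sqrt H' / (\<delta> * sqrt lam))"
    by simp_all
  then show ?thesis
    unfolding conf_radius_def using lam H
    by (intro mult_mono add_left_mono mult_left_mono) auto
qed

lemma conf_radius_exp_scale: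
  assumes "0 < lam" "0 < H" "0 < \<delta>"
  shows "conf_radius lam \<delta> (exp (2 * c) * H)
           = exp c * sqrt H * (sqrt lam / 2 + 2 / sqrt lam * (c + ln (2 * sqrt H / (\<delta> * sqrt lam))))"
proof -
  have "sqrt (exp (2 * c)) = exp c"
    by (rule real_sqrt_unique) (simp_all add: power2_eq_square flip: exp_add)
  then have "sqrt (exp (2 * c) * H) = exp c * sqrt H"
    by (simp add: real_sqrt_mult)
  moreover have "ln (2 * (exp c * sqrt H) / (\<delta> * sqrt lam)) = c + ln (2 * sqrt H / (\<delta> * sqrt lam))"
    using assms by (simp add: ln_mult ln_div)
  ultimately show ?thesis
    by (simp add: conf_radius_def)
qed

section \<open>Conditionally Bernoulli increments\<close>

lemma exp_le_1_plus_x_plus_sq: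
  fixes y :: real
  assumes "\<bar>y\<bar> \<le> 1"
  shows "exp y \<le> 1 + y + y\<^sup>2"
proof (cases "0 \<le> y")
  case True
  then show ?thesis using exp_bound assms by simp
next
  case False
  obtain t where "exp y = (\<Sum>m<3. y ^ m / fact m) + exp t / fact 3 * y ^ 3"
    using Maclaurin_exp_le[of y 3] by blast
  moreover have "(\<Sum>m<3. y ^ m / fact m) = 1 + y + y\<^sup>2 / 2"
    by (simp add: eval_nat_numeral fact_numeral power2_eq_square)
  moreover have "exp t / fact 3 * y ^ 3 \<le> 0"
    using False by (intro mult_nonneg_nonpos) (auto simp: power_le_zero_eq)
  moreover have "0 \<le> y\<^sup>2" by simp
  ultimately show ?thesis by linarith
qed

lemma bernoulli_mgf_le:
  fixes p \<theta> :: real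
  assumes "0 \<le> p" "p \<le> 1" "\<bar>\<theta>\<bar> \<le> 1"
  shows "p * exp (\<theta> * (1 - p)) + (1 - p) * exp (- \<theta> * p) \<le> exp (\<theta>\<^sup>2 * (p * (1 - p)))"
proof -
  have "\<bar>\<theta> * (1 - p)\<bar> \<le> 1" "\<bar>- \<theta> * p\<bar> \<le> 1"
    using assms by (simp_all add: abs_mult mult_le_one)
  then have "p * exp (\<theta> * (1 - p)) + (1 - p) * exp (- \<theta> * p)
      \<le> p * (1 + \<theta> * (1 - p) + (\<theta> * (1 - p))\<^sup>2) + (1 - p) * (1 + - \<theta> * p + (- \<theta> * p)\<^sup>2)"
    using assms by (intro add_mono mult_left_mono exp_le_1_plus_x_plus_sq) auto
  also have "\<dots> = 1 + \<theta>\<^sup>2 * (p * (1 - p))"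
    by (simp add: algebra_simps power2_eq_square)
  also have "\<dots> \<le> exp (\<theta>\<^sup>2 * (p * (1 - p)))"
    by (rule exp_ge_add_one_self)
  finally show ?thesis .
qed

lemma bernoulli_tilt_mean_le:
  fixes I p \<xi> Z :: real
  assumes "I \<in> {0, 1}" "0 \<le> p" "p \<le> 1" "\<bar>\<xi>\<bar> \<le> 1"
  shows "exp (Z + \<xi> * (I * (1 - p)) - \<xi>\<^sup>2 * (I * (p * (1 - p)))) * (I * p)
       + exp (Z + \<xi> * (I * (0 - p)) - \<xi>\<^sup>2 * (I * (p * (1 - p)))) * (1 - I * p) \<le> exp Z"
proof (cases "I = 0")
  case False
  then have "I = 1" using assms(1) by simp
  let ?v = "\<xi>\<^sup>2 * (p * (1 - p))"
  have "exp (Z + \<xi> * (1 - p) - ?v) * p + exp (Z + \<xi> * (0 - p) - ?v) * (1 - p)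
      = exp Z * exp (- ?v) * (p * exp (\<xi> * (1 - p)) + (1 - p) * exp (- \<xi> * p))"
    by (simp add: exp_add[symmetric] exp_diff algebra_simps exp_minus field_simps)
  also have "\<dots> \<le> exp Z * exp (- ?v) * exp ?v"
    using bernoulli_mgf_le[OF assms(2-4)] by (intro mult_left_mono) auto
  also have "\<dots> = exp Z"
    by (simp add: exp_minus)
  finally show ?thesis
    using \<open>I = 1\<close> by simp
qed simp

lemma (in prob_space) nn_integral_indicator_cond_prob:
  assumes sub: "subalgebra M G" and D: "D \<in> events"
    and q: "q \<in> borel_measurable G" "\<And>\<omega>. \<omega> \<in> space M \<Longrightarrow> 0 \<le> q \<omega> \<and> q \<omega> \<le> 1"
    and cond: "\<And>A. A \<in> sets G \<Longrightarrow> prob (A \<inter> D) = (LINT \<omega>:A|M. q \<omega>)"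
    and f: "f \<in> borel_measurable G"
  shows "(\<integral>\<^sup>+\<omega>. f \<omega> * indicator D \<omega> \<partial>M) = (\<integral>\<^sup>+\<omega>. f \<omega> * ennreal (q \<omega>) \<partial>M)"
proof -
  interpret finite_measure_subalgebra M G
    using sub by unfold_locales
  have [measurable]: "q \<in> borel_measurable M"
    using sub q(1) by (rule measurable_from_subalg)
  have "(\<integral>\<^sup>+\<omega>\<in>A. indicator D \<omega> \<partial>M) = (\<integral>\<^sup>+\<omega>\<in>A. ennreal (q \<omega>) \<partial>M)" if A: "A \<in> sets G" for A
  proof -
    have AM: "A \<in> events" using A sub by (auto simp: subalgebra_def)
    have "(\<integral>\<^sup>+\<omega>\<in>A. indicator D \<omega> \<partial>M) = emeasure M (A \<inter> D)"
      using AM D by (simp flip: nn_integral_indicator add: indicator_inter_arith ac_simps)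
    also have "\<dots> = ennreal (LINT \<omega>:A|M. q \<omega>)"
      using cond[OF A] by (simp add: emeasure_eq_measure)
    also have "\<dots> = (\<integral>\<^sup>+\<omega>\<in>A. ennreal (q \<omega>) \<partial>M)"
      using AM q(2)
      by (intro nn_set_integral_eq_set_integral[symmetric] integrable_const_bound[where B = 1]) auto
    finally show ?thesis .
  qed
  then have "AE \<omega> in M. ennreal (q \<omega>) = nn_cond_exp M G (indicator D) \<omega>"
    using D q(1) by (intro nn_cond_exp_charact) auto
  then have "(\<integral>\<^sup>+\<omega>. f \<omega> * ennreal (q \<omega>) \<partial>M) = (\<integral>\<^sup>+\<omega>. f \<omega> * nn_cond_exp M G (indicator D) \<omega> \<partial>M)"
    by (intro nn_integral_cong_AE) auto
  also have "\<dots> = (\<integral>\<^sup>+\<omega>. f \<omega> * indicator D \<omega> \<partial>M)"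
    using f D by (intro nn_cond_exp_intg) auto
  finally show ?thesis ..
qed

lemma (in prob_space) cond_prob_compl:
  assumes sub: "subalgebra M G" and D: "D \<in> events"
    and q: "q \<in> borel_measurable G" "\<And>\<omega>. \<omega> \<in> space M \<Longrightarrow> 0 \<le> q \<omega> \<and> q \<omega> \<le> 1"
    and cond: "\<And>A. A \<in> sets G \<Longrightarrow> prob (A \<inter> D) = (LINT \<omega>:A|M. q \<omega>)"
    and A: "A \<in> sets G"
  shows "prob (A \<inter> (space M - D)) = (LINT \<omega>:A|M. 1 - q \<omega>)"
proof -
  have AM: "A \<in> events" using A sub by (auto simp: subalgebra_def)
  have [measurable]: "q \<in> borel_measurable M"
    using sub q(1) by (rule measurable_from_subalg)
  have int: "integrable M (\<lambda>\<omega>. indicator A \<omega> * c \<omega>)"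
    if "\<And>\<omega>. \<omega> \<in> space M \<Longrightarrow> \<bar>c \<omega>\<bar> \<le> 1" "c \<in> borel_measurable M" for c :: "'a \<Rightarrow> real"
    using AM that by (intro integrable_const_bound[where B = 1]) (auto simp: indicator_def)
  have "A \<inter> (space M - D) = A - (A \<inter> D)"
    using sets.sets_into_space[OF AM] by auto
  then have "prob (A \<inter> (space M - D)) = prob A - prob (A \<inter> D)"
    using AM D by (simp add: finite_measure_Diff)
  also have "\<dots> = (\<integral>\<omega>. indicator A \<omega> * 1 \<partial>M) - (\<integral>\<omega>. indicator A \<omega> * q \<omega> \<partial>M)"
    using AM cond[OF A] by (simp add: set_lebesgue_integral_def)
  also have "\<dots> = (\<integral>\<omega>. indicator A \<omega> * 1 - indicator A \<omega> * q \<omega> \<partial>M)"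
    using q(2) by (intro Bochner_Integration.integral_diff[symmetric] int) auto
  also have "\<dots> = (LINT \<omega>:A|M. 1 - q \<omega>)"
    by (simp add: set_lebesgue_integral_def right_diff_distrib)
  finally show ?thesis .
qed

lemma (in prob_space) nn_integral_cond_bernoulli:
  fixes d q :: "'a \<Rightarrow> real" and Y :: "real \<Rightarrow> 'a \<Rightarrow> ennreal"
  assumes sub: "subalgebra M G"
    and d: "d \<in> borel_measurable M" "\<And>\<omega>. \<omega> \<in> space M \<Longrightarrow> d \<omega> \<in> {0, 1}"
    and q: "q \<in> borel_measurable G" "\<And>\<omega>. \<omega> \<in> space M \<Longrightarrow> 0 \<le> q \<omega> \<and> q \<omega> \<le> 1"
    and cond: "\<And>A. A \<in> sets G \<Longrightarrow> prob (A \<inter> {\<omega> \<in> space M. d \<omega> = 1}) = (LINT \<omega>:A|M. q \<omega>)"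
    and Y: "\<And>e. Y e \<in> borel_measurable G"
  shows "(\<integral>\<^sup>+\<omega>. Y (d \<omega>) \<omega> \<partial>M) = (\<integral>\<^sup>+\<omega>. Y 1 \<omega> * ennreal (q \<omega>) + Y 0 \<omega> * ennreal (1 - q \<omega>) \<partial>M)"
proof -
  define D where "D = {\<omega> \<in> space M. d \<omega> = 1}"
  have D: "D \<in> events" "space M - D \<in> events"
    unfolding D_def using d(1) by measurable
  have [measurable]: "Y e \<in> borel_measurable M" "q \<in> borel_measurable M" for e
    using measurable_from_subalg[OF sub Y] measurable_from_subalg[OF sub q(1)] by auto
  have q0: "(\<lambda>\<omega>. 1 - q \<omega>) \<in> borel_measurable G" "\<And>\<omega>. \<omega> \<in> space M \<Longrightarrow> 0 \<le> 1 - q \<omega> \<and> 1 - q \<omega> \<le> 1"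
    using q by auto
  have cond1: "prob (A \<inter> D) = (LINT \<omega>:A|M. q \<omega>)" if "A \<in> sets G" for A
    using cond[OF that] by (simp add: D_def)
  have "(\<integral>\<^sup>+\<omega>. Y (d \<omega>) \<omega> \<partial>M) = (\<integral>\<^sup>+\<omega>. Y 1 \<omega> * indicator D \<omega> + Y 0 \<omega> * indicator (space M - D) \<omega> \<partial>M)"
  proof (intro nn_integral_cong)
    fix \<omega> assume \<omega>: "\<omega> \<in> space M"
    then consider "d \<omega> = 0" | "d \<omega> = 1" using d(2) by auto
    then show "Y (d \<omega>) \<omega> = Y 1 \<omega> * indicator D \<omega> + Y 0 \<omega> * indicator (space M - D) \<omega>"
      using \<omega> by cases (auto simp: D_def)
  qed
  also have "\<dots> = (\<integral>\<^sup>+\<omega>. Y 1 \<omega> * indicator D \<omega> \<partial>M) + (\<integral>\<^sup>+\<omega>. Y 0 \<omega> * indicator (space M - D) \<omega> \<partial>M)"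
    using D by (intro nn_integral_add) auto
  also have "\<dots> = (\<integral>\<^sup>+\<omega>. Y 1 \<omega> * ennreal (q \<omega>) \<partial>M) + (\<integral>\<^sup>+\<omega>. Y 0 \<omega> * ennreal (1 - q \<omega>) \<partial>M)"
    using nn_integral_indicator_cond_prob[OF sub D(1) q cond1 Y[of 1]]
      nn_integral_indicator_cond_prob[OF sub D(2) q0 cond_prob_compl[OF sub D(1) q cond1] Y[of 0]]
    by (simp only:)
  also have "\<dots> = (\<integral>\<^sup>+\<omega>. Y 1 \<omega> * ennreal (q \<omega>) + Y 0 \<omega> * ennreal (1 - q \<omega>) \<partial>M)"
    by (intro nn_integral_add[symmetric]) auto
  finally show ?thesis .
qed

lemma (in prob_space) exp_bernoulli_increment_le:
  fixes Z I p d :: "'a \<Rightarrow> real"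
  assumes sub: "subalgebra M G"
    and [measurable]: "Z \<in> borel_measurable G" "I \<in> borel_measurable G" "p \<in> borel_measurable G"
      "d \<in> borel_measurable M"
    and vals: "\<And>\<omega>. \<omega> \<in> space M \<Longrightarrow> I \<omega> \<in> {0, 1} \<and> 0 \<le> p \<omega> \<and> p \<omega> \<le> 1 \<and> d \<omega> \<in> {0, 1}"
    and cond: "\<And>A. A \<in> sets G \<Longrightarrow> prob (A \<inter> {\<omega>\<in>space M. d \<omega> = 1}) = (LINT \<omega>:A|M. I \<omega> * p \<omega>)"
    and \<xi>: "\<bar>\<xi>\<bar> \<le> 1" and A [measurable]: "A \<in> sets G"
  shows "(\<integral>\<^sup>+\<omega>. ennreal (exp (Z \<omega> + \<xi> * (I \<omega> * (d \<omega> - p \<omega>)) - \<xi>\<^sup>2 * (I \<omega> * (p \<omega> * (1 - p \<omega>)))))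
            * indicator A \<omega> \<partial>M)
       \<le> (\<integral>\<^sup>+\<omega>. ennreal (exp (Z \<omega>)) * indicator A \<omega> \<partial>M)"
proof -
  define q where "q \<omega> = I \<omega> * p \<omega>" for \<omega>
  define Y where "Y e \<omega> = ennreal (exp (Z \<omega> + \<xi> * (I \<omega> * (e - p \<omega>)) - \<xi>\<^sup>2 * (I \<omega> * (p \<omega> * (1 - p \<omega>)))))
    * indicator A \<omega>" for e \<omega>
  have q: "0 \<le> q \<omega> \<and> q \<omega> \<le> 1" if "\<omega> \<in> space M" for \<omega>
    using vals[OF that] unfolding q_def by (cases "I \<omega> = 0") auto
  have "(\<integral>\<^sup>+\<omega>. ennreal (exp (Z \<omega> + \<xi> * (I \<omega> * (d \<omega> - p \<omega>)) - \<xi>\<^sup>2 * (I \<omega> * (p \<omega> * (1 - p \<omega>)))))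
            * indicator A \<omega> \<partial>M) = (\<integral>\<^sup>+\<omega>. Y (d \<omega>) \<omega> \<partial>M)"
    by (simp add: Y_def)
  also have "\<dots> = (\<integral>\<^sup>+\<omega>. Y 1 \<omega> * ennreal (q \<omega>) + Y 0 \<omega> * ennreal (1 - q \<omega>) \<partial>M)"
  proof (rule nn_integral_cond_bernoulli[where Y = Y and d = d and q = q, OF sub])
    show "d \<in> borel_measurable M"
      by measurable
    show "q \<in> borel_measurable G"
      unfolding q_def[abs_def] by measurable
    show "Y e \<in> borel_measurable G" for e
      unfolding Y_def[abs_def] by measurable
    show "d \<omega> \<in> {0, 1}" "0 \<le> q \<omega> \<and> q \<omega> \<le> 1" if "\<omega> \<in> space M" for \<omega>
      using vals[OF that] q[OF that] by blast+
    show "prob (B \<inter> {\<omega> \<in> space M. d \<omega> = 1}) = (LINT \<omega>:B|M. q \<omega>)" if "B \<in> sets G" for B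
      unfolding q_def by (rule cond[OF that])
  qed
  also have "\<dots> \<le> (\<integral>\<^sup>+\<omega>. ennreal (exp (Z \<omega>)) * indicator A \<omega> \<partial>M)"
  proof (intro nn_integral_mono)
    fix \<omega> assume \<omega>: "\<omega> \<in> space M"
    have "exp (Z \<omega> + \<xi> * (I \<omega> * (1 - p \<omega>)) - \<xi>\<^sup>2 * (I \<omega> * (p \<omega> * (1 - p \<omega>)))) * q \<omega>
        + exp (Z \<omega> + \<xi> * (I \<omega> * (0 - p \<omega>)) - \<xi>\<^sup>2 * (I \<omega> * (p \<omega> * (1 - p \<omega>)))) * (1 - q \<omega>)
        \<le> exp (Z \<omega>)"
      unfolding q_def using vals[OF \<omega>] \<xi> by (intro bernoulli_tilt_mean_le) auto
    with q[OF \<omega>]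
    show "Y 1 \<omega> * ennreal (q \<omega>) + Y 0 \<omega> * ennreal (1 - q \<omega>) \<le> ennreal (exp (Z \<omega>)) * indicator A \<omega>"
      by (simp add: Y_def indicator_def ennreal_mult''[symmetric] ennreal_plus[symmetric] del: ennreal_plus)
  qed
  finally show ?thesis .
qed

section \<open>Ville's inequality and the self-normalised bound\<close>

locale filtered_prob_space = prob_space +
  fixes F :: "nat \<Rightarrow> 'a measure"
  assumes subalgebra_F: "1 \<le> t \<Longrightarrow> subalgebra M (F t)"
    and sets_F_Suc: "1 \<le> t \<Longrightarrow> sets (F t) \<subseteq> sets (F (Suc t))"
begin

lemma subalgebra_F_F:
  assumes "1 \<le> s" "s \<le> t"
  shows "subalgebra (F t) (F s)"
proof -
  have "sets (F s) \<subseteq> sets (F t)"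
    using assms(2)
  proof (induction t rule: dec_induct)
    case (step n)
    then show ?case using assms(1) sets_F_Suc[of n] by auto
  qed simp
  then show ?thesis
    using assms subalgebra_F[of s] subalgebra_F[of t] by (auto simp: subalgebra_def)
qed

lemma measurable_F_mono:
  assumes "f \<in> measurable (F s) N" "1 \<le> s" "s \<le> t"
  shows "f \<in> measurable (F t) N"
  using subalgebra_F_F[OF assms(2,3)] assms(1) by (rule measurable_from_subalg)

lemma measurable_F:
  assumes "f \<in> measurable (F t) N" "1 \<le> t"
  shows "f \<in> measurable M N"
  using subalgebra_F[OF assms(2)] assms(1) by (rule measurable_from_subalg)

definition reached :: "(nat \<Rightarrow> 'a \<Rightarrow> ennreal) \<Rightarrow> ennreal \<Rightarrow> nat \<Rightarrow> 'a set" where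
  "reached N c T = {\<omega> \<in> space M. \<exists>t\<in>{1..T}. c \<le> N t \<omega>}"

lemma reached_Suc: "reached N c (Suc T) = reached N c T \<union> {\<omega> \<in> space M. c \<le> N (Suc T) \<omega>}"
  by (auto simp: reached_def atLeastAtMostSuc_conv)

context
  fixes N :: "nat \<Rightarrow> 'a \<Rightarrow> ennreal"
  assumes adapted: "\<And>t. 1 \<le> t \<Longrightarrow> N t \<in> borel_measurable (F t)"
begin

lemma reached_in_F:
  assumes "1 \<le> T"
  shows "reached N c T \<in> sets (F T)"
proof -
  have "reached N c T = (\<Union>t\<in>{1..T}. {\<omega> \<in> space (F T). c \<le> N t \<omega>})"
    using subalgebra_F[OF assms] by (auto simp: reached_def subalgebra_def)
  also have "\<dots> \<in> sets (F T)"
  proof (intro sets.finite_UN)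
    fix t assume "t \<in> {1..T}"
    then have [measurable]: "N t \<in> borel_measurable (F T)"
      using measurable_F_mono[OF adapted[of t]] by auto
    show "{\<omega> \<in> space (F T). c \<le> N t \<omega>} \<in> sets (F T)" by measurable
  qed auto
  finally show ?thesis .
qed

lemma reached_in_events: "reached N c T \<in> events"
proof (cases "T = 0")
  case False
  then show ?thesis
    using reached_in_F[of T] subalgebra_F[of T] by (auto simp: subalgebra_def)
qed (simp add: reached_def)

lemma ever_reached_eq: "{\<omega> \<in> space M. \<exists>t\<ge>1. c \<le> N t \<omega>} = (\<Union>T. reached N c T)"
proof (intro equalityI subsetI)
  fix \<omega> assume "\<omega> \<in> {\<omega> \<in> space M. \<exists>t\<ge>1. c \<le> N t \<omega>}"
  then obtain t where "\<omega> \<in> space M" "1 \<le> t" "c \<le> N t \<omega>" by auto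
  then have "\<omega> \<in> reached N c t" by (auto simp: reached_def)
  then show "\<omega> \<in> (\<Union>T. reached N c T)" by blast
qed (auto simp: reached_def)

context
  assumes supermartingale: "\<And>t A. 1 \<le> t \<Longrightarrow> A \<in> sets (F t) \<Longrightarrow>
    (\<integral>\<^sup>+\<omega>. N (Suc t) \<omega> * indicator A \<omega> \<partial>M) \<le> (\<integral>\<^sup>+\<omega>. N t \<omega> * indicator A \<omega> \<partial>M)"
begin

text \<open>The integrand is a lower bound for \<open>N\<close> stopped at the first time it reaches \<open>c\<close>.\<close>

lemma nn_integral_stopped_le:
  assumes "1 \<le> T"
  shows "(\<integral>\<^sup>+\<omega>. c * indicator (reached N c T) \<omega> + N T \<omega> * indicator (space M - reached N c T) \<omega> \<partial>M)
           \<le> (\<integral>\<^sup>+\<omega>. N 1 \<omega> \<partial>M)"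
  using assms
proof (induction T rule: dec_induct)
  case base
  show ?case by (intro nn_integral_mono) (auto simp: reached_def indicator_def)
next
  case (step T)
  let ?E = "reached N c T"
  have [measurable]: "?E \<in> events" "N T \<in> borel_measurable M" "N (Suc T) \<in> borel_measurable M"
    using reached_in_events measurable_F[OF adapted[OF step(1)] step(1)]
      measurable_F[OF adapted[of "Suc T"]] by auto
  have "(\<integral>\<^sup>+\<omega>. c * indicator (reached N c (Suc T)) \<omega>
           + N (Suc T) \<omega> * indicator (space M - reached N c (Suc T)) \<omega> \<partial>M)
      \<le> (\<integral>\<^sup>+\<omega>. c * indicator ?E \<omega> + N (Suc T) \<omega> * indicator (space M - ?E) \<omega> \<partial>M)"
    by (intro nn_integral_mono) (auto simp: reached_Suc indicator_def)
  also have "\<dots> = (\<integral>\<^sup>+\<omega>. c * indicator ?E \<omega> \<partial>M) + (\<integral>\<^sup>+\<omega>. N (Suc T) \<omega> * indicator (space M - ?E) \<omega> \<partial>M)"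
    by (intro nn_integral_add) auto
  also have "\<dots> \<le> (\<integral>\<^sup>+\<omega>. c * indicator ?E \<omega> \<partial>M) + (\<integral>\<^sup>+\<omega>. N T \<omega> * indicator (space M - ?E) \<omega> \<partial>M)"
    using sets.compl_sets[OF reached_in_F[OF step(1)]] subalgebra_F[OF step(1)] step(1)
    by (intro add_left_mono supermartingale) (auto simp: subalgebra_def)
  also have "\<dots> = (\<integral>\<^sup>+\<omega>. c * indicator ?E \<omega> + N T \<omega> * indicator (space M - ?E) \<omega> \<partial>M)"
    by (intro nn_integral_add[symmetric]) auto
  finally show ?case
    using step.IH by (rule order_trans)
qed

theorem ville_inequality:
  "c * emeasure M {\<omega> \<in> space M. \<exists>t\<ge>1. c \<le> N t \<omega>} \<le> (\<integral>\<^sup>+\<omega>. N 1 \<omega> \<partial>M)"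
proof -
  have stopped: "c * emeasure M (reached N c T) \<le> (\<integral>\<^sup>+\<omega>. N 1 \<omega> \<partial>M)" for T
  proof (cases "T = 0")
    case False
    have [measurable]: "N T \<in> borel_measurable M"
      using False measurable_F[OF adapted[of T]] by auto
    have "c * emeasure M (reached N c T) = (\<integral>\<^sup>+\<omega>. c * indicator (reached N c T) \<omega> \<partial>M)"
      by (rule nn_integral_cmult_indicator[symmetric]) (rule reached_in_events)
    also have "\<dots> \<le> (\<integral>\<^sup>+\<omega>. c * indicator (reached N c T) \<omega> + N T \<omega> * indicator (space M - reached N c T) \<omega> \<partial>M)"
      by (intro nn_integral_mono) simp
    also have "\<dots> \<le> (\<integral>\<^sup>+\<omega>. N 1 \<omega> \<partial>M)"
      using False by (intro nn_integral_stopped_le) simp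
    finally show ?thesis .
  qed (simp add: reached_def)
  have "incseq (reached N c)"
    by (rule incseq_SucI) (auto simp: reached_Suc)
  then have "emeasure M {\<omega> \<in> space M. \<exists>t\<ge>1. c \<le> N t \<omega>} = (SUP T. emeasure M (reached N c T))"
    unfolding ever_reached_eq using reached_in_events by (intro SUP_emeasure_incseq[symmetric]) auto
  then have "c * emeasure M {\<omega> \<in> space M. \<exists>t\<ge>1. c \<le> N t \<omega>} = (SUP T. c * emeasure M (reached N c T))"
    by (simp add: SUP_mult_left_ennreal)
  also have "\<dots> \<le> (\<integral>\<^sup>+\<omega>. N 1 \<omega> \<partial>M)"
    by (rule SUP_least) (rule stopped)
  finally show ?thesis .
qed

end

end

end

locale adapted_bernoulli = filtered_prob_space +
  fixes I p d :: "nat \<Rightarrow> 'a \<Rightarrow> real"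
  assumes I_measurable: "1 \<le> t \<Longrightarrow> I t \<in> borel_measurable (F t)"
    and p_measurable: "1 \<le> t \<Longrightarrow> p t \<in> borel_measurable (F t)"
    and d_measurable: "1 \<le> t \<Longrightarrow> d t \<in> borel_measurable (F (Suc t))"
    and bernoulli_values: "1 \<le> t \<Longrightarrow> \<omega> \<in> space M \<Longrightarrow>
      I t \<omega> \<in> {0, 1} \<and> 0 \<le> p t \<omega> \<and> p t \<omega> \<le> 1 \<and> d t \<omega> \<in> {0, 1}"
    and cond_prob_d: "1 \<le> t \<Longrightarrow> A \<in> sets (F t) \<Longrightarrow>
      prob (A \<inter> {\<omega> \<in> space M. d t \<omega> = 1}) = (LINT \<omega>:A|M. I t \<omega> * p t \<omega>)"
begin

definition centered_sum :: "nat \<Rightarrow> 'a \<Rightarrow> real" where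
  "centered_sum t \<omega> = (\<Sum>s\<in>{1..<t}. I s \<omega> * (d s \<omega> - p s \<omega>))"

definition variance_sum :: "nat \<Rightarrow> 'a \<Rightarrow> real" where
  "variance_sum t \<omega> = (\<Sum>s\<in>{1..<t}. I s \<omega> * (p s \<omega> * (1 - p s \<omega>)))"

lemma
  assumes "1 \<le> t"
  shows centered_sum_Suc: "centered_sum (Suc t) \<omega> = centered_sum t \<omega> + I t \<omega> * (d t \<omega> - p t \<omega>)"
    and variance_sum_Suc: "variance_sum (Suc t) \<omega> = variance_sum t \<omega> + I t \<omega> * (p t \<omega> * (1 - p t \<omega>))"
proof -
  have "{1..<Suc t} = insert t {1..<t}" using assms by auto
  then show "centered_sum (Suc t) \<omega> = centered_sum t \<omega> + I t \<omega> * (d t \<omega> - p t \<omega>)"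
    and "variance_sum (Suc t) \<omega> = variance_sum t \<omega> + I t \<omega> * (p t \<omega> * (1 - p t \<omega>))"
    by (simp_all add: centered_sum_def variance_sum_def)
qed

lemma
  shows centered_sum_measurable: "centered_sum t \<in> borel_measurable (F t)"
    and variance_sum_measurable: "variance_sum t \<in> borel_measurable (F t)"
proof -
  have meas: "I s \<in> borel_measurable (F t) \<and> p s \<in> borel_measurable (F t) \<and> d s \<in> borel_measurable (F t)"
    if "s \<in> {1..<t}" for s
    using that measurable_F_mono[OF I_measurable[of s]] measurable_F_mono[OF p_measurable[of s]]
      measurable_F_mono[OF d_measurable[of s]] by auto
  show "centered_sum t \<in> borel_measurable (F t)"
    unfolding centered_sum_def
  proof (rule borel_measurable_sum)
    fix s assume "s \<in> {1..<t}"
    with meas have [measurable]: "I s \<in> borel_measurable (F t)" "p s \<in> borel_measurable (F t)"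
      "d s \<in> borel_measurable (F t)" by auto
    show "(\<lambda>\<omega>. I s \<omega> * (d s \<omega> - p s \<omega>)) \<in> borel_measurable (F t)" by measurable
  qed
  show "variance_sum t \<in> borel_measurable (F t)"
    unfolding variance_sum_def
  proof (rule borel_measurable_sum)
    fix s assume "s \<in> {1..<t}"
    with meas have [measurable]: "I s \<in> borel_measurable (F t)" "p s \<in> borel_measurable (F t)" by auto
    show "(\<lambda>\<omega>. I s \<omega> * (p s \<omega> * (1 - p s \<omega>))) \<in> borel_measurable (F t)" by measurable
  qed
qed

lemma variance_sum_nonneg:
  assumes "\<omega> \<in> space M"
  shows "0 \<le> variance_sum t \<omega>"
  unfolding variance_sum_def
proof (intro sum_nonneg)
  fix s assume "s \<in> {1..<t}"
  then have "I s \<omega> \<in> {0, 1}" "0 \<le> p s \<omega>" "p s \<omega> \<le> 1"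
    using bernoulli_values[of s \<omega>] assms by auto
  then show "0 \<le> I s \<omega> * (p s \<omega> * (1 - p s \<omega>))" by auto
qed

lemma exp_tilt_supermartingale:
  assumes t: "1 \<le> t" and A: "A \<in> sets (F t)" and \<xi>: "\<bar>\<xi>\<bar> \<le> 1"
  shows "(\<integral>\<^sup>+\<omega>. ennreal (exp (\<xi> * centered_sum (Suc t) \<omega> - \<xi>\<^sup>2 * (lam + variance_sum (Suc t) \<omega>)))
            * indicator A \<omega> \<partial>M)
       \<le> (\<integral>\<^sup>+\<omega>. ennreal (exp (\<xi> * centered_sum t \<omega> - \<xi>\<^sup>2 * (lam + variance_sum t \<omega>)))
            * indicator A \<omega> \<partial>M)"
proof -
  let ?Z = "\<lambda>\<omega>. \<xi> * centered_sum t \<omega> - \<xi>\<^sup>2 * (lam + variance_sum t \<omega>)"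
  have [measurable]: "centered_sum t \<in> borel_measurable (F t)" "variance_sum t \<in> borel_measurable (F t)"
    by (rule centered_sum_measurable variance_sum_measurable)+
  have Z: "?Z \<in> borel_measurable (F t)"
    by measurable
  have "\<xi> * centered_sum (Suc t) \<omega> - \<xi>\<^sup>2 * (lam + variance_sum (Suc t) \<omega>)
      = ?Z \<omega> + \<xi> * (I t \<omega> * (d t \<omega> - p t \<omega>)) - \<xi>\<^sup>2 * (I t \<omega> * (p t \<omega> * (1 - p t \<omega>)))" for \<omega>
    by (simp add: centered_sum_Suc[OF t] variance_sum_Suc[OF t] algebra_simps)
  then have "(\<integral>\<^sup>+\<omega>. ennreal (exp (\<xi> * centered_sum (Suc t) \<omega> - \<xi>\<^sup>2 * (lam + variance_sum (Suc t) \<omega>)))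
            * indicator A \<omega> \<partial>M)
      = (\<integral>\<^sup>+\<omega>. ennreal (exp (?Z \<omega> + \<xi> * (I t \<omega> * (d t \<omega> - p t \<omega>))
            - \<xi>\<^sup>2 * (I t \<omega> * (p t \<omega> * (1 - p t \<omega>))))) * indicator A \<omega> \<partial>M)"
    by (simp only:)
  also have "\<dots> \<le> (\<integral>\<^sup>+\<omega>. ennreal (exp (?Z \<omega>)) * indicator A \<omega> \<partial>M)"
    by (rule exp_bernoulli_increment_le[OF subalgebra_F[OF t] Z I_measurable[OF t] p_measurable[OF t]
          measurable_F[OF d_measurable[OF t]] bernoulli_values[OF t] cond_prob_d[OF t] \<xi> A]) simp
  finally show ?thesis .
qed

lemma tilt_mixture_supermartingale:
  assumes t: "1 \<le> t" and A: "A \<in> sets (F t)"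
  shows "(\<integral>\<^sup>+\<omega>. tilt_mixture (centered_sum (Suc t) \<omega>) (lam + variance_sum (Suc t) \<omega>) * indicator A \<omega> \<partial>M)
       \<le> (\<integral>\<^sup>+\<omega>. tilt_mixture (centered_sum t \<omega>) (lam + variance_sum t \<omega>) * indicator A \<omega> \<partial>M)"
proof -
  have [measurable]: "centered_sum t' \<in> borel_measurable M" "variance_sum t' \<in> borel_measurable M"
    if "t' \<in> {t, Suc t}" for t'
    using that t
    by (auto intro: measurable_F[OF centered_sum_measurable] measurable_F[OF variance_sum_measurable])
  have [measurable]: "A \<in> events"
    using A subalgebra_F[OF t] by (auto simp: subalgebra_def)
  let ?K = "\<lambda>t' \<xi>. indicator {-1..1} \<xi> *
    (\<integral>\<^sup>+\<omega>. ennreal (exp (\<xi> * centered_sum t' \<omega> - \<xi>\<^sup>2 * (lam + variance_sum t' \<omega>))) * indicator A \<omega> \<partial>M)"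
  have "(\<integral>\<^sup>+\<omega>. tilt_mixture (centered_sum (Suc t) \<omega>) (lam + variance_sum (Suc t) \<omega>) * indicator A \<omega> \<partial>M)
      = (\<integral>\<^sup>+\<xi>. ?K (Suc t) \<xi> \<partial>lborel)"
    by (rule nn_integral_tilt_mixture) auto
  also have "\<dots> \<le> (\<integral>\<^sup>+\<xi>. ?K t \<xi> \<partial>lborel)"
  proof (intro nn_integral_mono)
    fix \<xi> :: real
    show "?K (Suc t) \<xi> \<le> ?K t \<xi>"
      using exp_tilt_supermartingale[OF t A, of \<xi>] by (cases "\<xi> \<in> {-1..1}") auto
  qed
  also have "\<dots> = (\<integral>\<^sup>+\<omega>. tilt_mixture (centered_sum t \<omega>) (lam + variance_sum t \<omega>) * indicator A \<omega> \<partial>M)"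
    by (rule nn_integral_tilt_mixture[symmetric]) auto
  finally show ?thesis .
qed

lemma tilt_mixture_measurable:
  "(\<lambda>\<omega>. tilt_mixture (centered_sum t \<omega>) (lam + variance_sum t \<omega>)) \<in> borel_measurable (F t)"
proof -
  have [measurable]: "centered_sum t \<in> borel_measurable (F t)" "variance_sum t \<in> borel_measurable (F t)"
    by (rule centered_sum_measurable variance_sum_measurable)+
  show ?thesis by measurable
qed

lemma tilt_mixture_crossing_le:
  "c * emeasure M {\<omega> \<in> space M. \<exists>t\<ge>1. c \<le> tilt_mixture (centered_sum t \<omega>) (lam + variance_sum t \<omega>)}
     \<le> trunc_gauss 1 lam"
proof -
  have "c * emeasure M {\<omega> \<in> space M. \<exists>t\<ge>1. c \<le> tilt_mixture (centered_sum t \<omega>) (lam + variance_sum t \<omega>)}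
      \<le> (\<integral>\<^sup>+\<omega>. tilt_mixture (centered_sum 1 \<omega>) (lam + variance_sum 1 \<omega>) \<partial>M)"
    by (rule ville_inequality[where N = "\<lambda>t \<omega>. tilt_mixture (centered_sum t \<omega>) (lam + variance_sum t \<omega>)"])
      (auto intro: tilt_mixture_measurable tilt_mixture_supermartingale)
  also have "\<dots> = trunc_gauss 1 lam"
    by (simp add: centered_sum_def variance_sum_def tilt_mixture_0 emeasure_space_1)
  finally show ?thesis .
qed

theorem self_normalized_bound:
  assumes lam: "0 < lam" and \<delta>: "0 < \<delta>"
  shows "\<exists>B\<in>events. prob B \<le> \<delta> \<and>
    (\<forall>\<omega>\<in>space M - B. \<forall>t\<ge>1. \<bar>centered_sum t \<omega>\<bar> \<le> conf_radius lam \<delta> (lam + variance_sum t \<omega>))"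
proof -
  define N where "N t \<omega> = tilt_mixture (centered_sum t \<omega>) (lam + variance_sum t \<omega>)" for t \<omega>
  have adapted: "N t \<in> borel_measurable (F t)" for t
    unfolding N_def by (rule tilt_mixture_measurable)
  obtain J where J: "trunc_gauss 1 lam = ennreal J" "0 < J"
    using trunc_gauss_pos[of lam] trunc_gauss_finite[of lam] lam
    by (cases "trunc_gauss 1 lam") auto
  define B where "B = {\<omega> \<in> space M. \<exists>t\<ge>1. ennreal (J / \<delta>) \<le> N t \<omega>}"
  have B: "B \<in> events"
    unfolding B_def ever_reached_eq[OF adapted] using reached_in_events[OF adapted] by auto
  have "ennreal (J / \<delta> * prob B) = ennreal (J / \<delta>) * emeasure M B"
    using J \<delta> by (simp add: emeasure_eq_measure ennreal_mult[symmetric])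
  also have "\<dots> \<le> ennreal J"
    using tilt_mixture_crossing_le[of "ennreal (J / \<delta>)" lam] J(1) by (simp add: B_def N_def)
  finally have "J * prob B \<le> J * \<delta>"
    using J \<delta> by (simp add: field_simps)
  then have "prob B \<le> \<delta>"
    using J(2) by simp
  moreover have "\<bar>centered_sum t \<omega>\<bar> \<le> conf_radius lam \<delta> (lam + variance_sum t \<omega>)"
    if "\<omega> \<in> space M - B" "1 \<le> t" for \<omega> t
  proof -
    from that have "\<not> ennreal (J / \<delta>) \<le> N t \<omega>"
      unfolding B_def by blast
    then have "N t \<omega> < ennreal (J / \<delta>)"
      by (rule not_le_imp_less)
    then show ?thesis
      using that variance_sum_nonneg[of \<omega> t] unfolding N_def
      by (intro abs_le_conf_radius_of_tilt_mixture[OF lam _ \<delta> J]) auto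
  qed
  ultimately show ?thesis
    using B by (intro bexI[of _ B] conjI ballI allI impI) simp_all
qed

end

section \<open>The penalised maximum-likelihood estimator\<close>

lemma pen_loglik_has_real_derivative:
  "(pen_loglik lam xs us ds i t has_real_derivative
      (\<Sum>s\<in>{1..<t}. (if us s = basis_vec i then 1 else 0) * (ds s i - sigmoid (xs s + m))) - lam * m) (at m)"
proof -
  have "((\<lambda>m. ds s i * ln (sigmoid (xs s + m)) + (1 - ds s i) * ln (1 - sigmoid (xs s + m)))
      has_real_derivative ds s i - sigmoid (xs s + m)) (at m)" for s
  proof -
    have shift: "((\<lambda>m. xs s + m) has_real_derivative 1) (at m)"
      by (auto intro!: derivative_eq_intros)
    have "((\<lambda>m. ds s i * ln (sigmoid (xs s + m)) + (1 - ds s i) * ln (1 - sigmoid (xs s + m)))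
        has_real_derivative
          ds s i * ((1 - sigmoid (xs s + m)) * 1) + (1 - ds s i) * (- sigmoid (xs s + m) * 1)) (at m)"
      using DERIV_chain2[OF ln_sigmoid_has_real_derivative shift]
        DERIV_chain2[OF ln_one_minus_sigmoid_has_real_derivative shift]
      by (intro DERIV_add DERIV_cmult) auto
    then show ?thesis
      by (simp add: algebra_simps)
  qed
  then have "((\<lambda>m. (\<Sum>s\<in>{1..<t}. (if us s = basis_vec i then 1 else 0) *
          (ds s i * ln (sigmoid (xs s + m)) + (1 - ds s i) * ln (1 - sigmoid (xs s + m)))) - lam / 2 * m\<^sup>2)
      has_real_derivative
        (\<Sum>s\<in>{1..<t}. (if us s = basis_vec i then 1 else 0) * (ds s i - sigmoid (xs s + m)))
          - lam / 2 * (2 * m))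
      (at m)"
    by (intro DERIV_diff DERIV_sum DERIV_cmult) (auto intro!: derivative_eq_intros)
  then show ?thesis
    by (simp add: pen_loglik_def[abs_def])
qed

lemma pen_loglik_le:
  assumes "\<forall>s\<in>{1..<t}. 0 \<le> ds s i \<and> ds s i \<le> 1"
  shows "pen_loglik lam xs us ds i t m \<le> - (lam / 2 * m\<^sup>2)"
proof -
  have "(if us s = basis_vec i then 1 else 0) *
      (ds s i * ln (sigmoid (xs s + m)) + (1 - ds s i) * ln (1 - sigmoid (xs s + m))) \<le> 0"
    if "s \<in> {1..<t}" for s
  proof -
    have "ln (sigmoid (xs s + m)) \<le> 0" "ln (1 - sigmoid (xs s + m)) \<le> 0"
      using sigmoid_pos[of "xs s + m"] sigmoid_less_1[of "xs s + m"] by simp_all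
    then show ?thesis
      using assms that by (auto intro!: add_nonpos_nonpos mult_nonneg_nonpos)
  qed
  then have "(\<Sum>s\<in>{1..<t}. (if us s = basis_vec i then 1 else 0) *
      (ds s i * ln (sigmoid (xs s + m)) + (1 - ds s i) * ln (1 - sigmoid (xs s + m)))) \<le> 0"
    by (rule sum_nonpos)
  then show ?thesis
    unfolding pen_loglik_def by linarith
qed

lemma pen_loglik_has_max:
  assumes lam: "0 < lam" and ds: "\<forall>s\<in>{1..<t}. 0 \<le> ds s i \<and> ds s i \<le> 1"
  shows "\<exists>m. \<forall>m'. pen_loglik lam xs us ds i t m' \<le> pen_loglik lam xs us ds i t m"
proof -
  let ?L = "pen_loglik lam xs us ds i t"
  define R where "R = sqrt (2 * \<bar>?L 0\<bar> / lam)"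
  have R: "0 \<le> R" "R\<^sup>2 = 2 * \<bar>?L 0\<bar> / lam"
    using lam by (simp_all add: R_def)
  have "continuous_on {-R..R} ?L"
    using pen_loglik_has_real_derivative by (intro continuous_at_imp_continuous_on ballI DERIV_isCont) blast
  then obtain m where m: "m \<in> {-R..R}" "\<And>m'. m' \<in> {-R..R} \<Longrightarrow> ?L m' \<le> ?L m"
    using continuous_attains_sup[of "{-R..R}" ?L] R(1) by auto
  have "?L m' \<le> ?L m" for m'
  proof (cases "m' \<in> {-R..R}")
    case False
    then have "R\<^sup>2 \<le> m'\<^sup>2"
      using R(1) by (intro abs_le_square_iff[THEN iffD1]) auto
    then have "\<bar>?L 0\<bar> \<le> lam / 2 * m'\<^sup>2"
      using R(2) lam by (simp add: field_simps)
    then have "?L m' \<le> ?L 0"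
      using pen_loglik_le[where lam = lam and xs = xs and us = us and m = m' and ds = ds and i = i and t = t, OF ds]
      by linarith
    also have "\<dots> \<le> ?L m"
      using m R(1) by simp
    finally show ?thesis .
  qed (use m in simp)
  then show ?thesis by blast
qed

lemma mu_mle_first_order:
  assumes "0 < lam" "\<forall>s\<in>{1..<t}. 0 \<le> ds s i \<and> ds s i \<le> 1"
  shows "(\<Sum>s\<in>{1..<t}. (if us s = basis_vec i then 1 else 0)
            * (ds s i - sigmoid (xs s + mu_mle lam xs us ds i t))) = lam * mu_mle lam xs us ds i t"
proof -
  have "\<forall>m'. pen_loglik lam xs us ds i t m' \<le> pen_loglik lam xs us ds i t (mu_mle lam xs us ds i t)"
    unfolding mu_mle_def
    by (rule someI_ex[OF pen_loglik_has_max[where ds = ds and i = i and t = t and xs = xs and us = us, OF assms]])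
  then have "(\<Sum>s\<in>{1..<t}. (if us s = basis_vec i then 1 else 0)
      * (ds s i - sigmoid (xs s + mu_mle lam xs us ds i t))) - lam * mu_mle lam xs us ds i t = 0"
    by (intro DERIV_local_max[OF pen_loglik_has_real_derivative, of 1]) auto
  then show ?thesis by simp
qed

lemma mono_clamp_dist_le:
  fixes G :: "real \<Rightarrow> real"
  assumes G: "mono G" and a: "\<bar>a\<bar> \<le> r"
  shows "\<bar>G (max (- r) (min r m)) - G a\<bar> \<le> \<bar>G m - G a\<bar>"
proof (cases "a \<le> m")
  case True
  then have "G a \<le> G (max (- r) (min r m))" "G (max (- r) (min r m)) \<le> G m"
    using a by (auto intro!: monoD[OF G])
  then show ?thesis by linarith
next
  case False
  then have "G m \<le> G (max (- r) (min r m))" "G (max (- r) (min r m)) \<le> G a"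
    using a by (auto intro!: monoD[OF G])
  then show ?thesis by linarith
qed

lemma sum_sigmoid_increment_ge:
  assumes w: "\<forall>s\<in>T. 0 \<le> w s" and lam: "0 \<le> lam" and K: "\<bar>b - a\<bar> \<le> K"
  shows "exp (- K) * (lam + (\<Sum>s\<in>T. w s * sigmoid' (x s + a))) * (b - a)\<^sup>2
           \<le> (b - a) * ((lam * b + (\<Sum>s\<in>T. w s * sigmoid (x s + b)))
                          - (lam * a + (\<Sum>s\<in>T. w s * sigmoid (x s + a))))"
proof -
  have "exp (- K) \<le> exp (- \<bar>b - a\<bar>)" "exp (- K) \<le> 1"
    using K by auto
  have "exp (- K) * (w s * sigmoid' (x s + a)) * (b - a)\<^sup>2
      \<le> (b - a) * (w s * (sigmoid (x s + b) - sigmoid (x s + a)))"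
    if "s \<in> T" for s
  proof -
    have "exp (- K) * sigmoid' (x s + a) * (b - a)\<^sup>2 \<le> exp (- \<bar>b - a\<bar>) * sigmoid' (x s + a) * (b - a)\<^sup>2"
      using \<open>exp (- K) \<le> exp (- \<bar>b - a\<bar>)\<close> sigmoid'_pos[of "x s + a"] by (intro mult_right_mono) auto
    also have "\<dots> \<le> (b - a) * (sigmoid (x s + b) - sigmoid (x s + a))"
      using sigmoid_increment_ge[of "x s + b" "x s + a"] by simp
    finally have "exp (- K) * sigmoid' (x s + a) * (b - a)\<^sup>2
        \<le> (b - a) * (sigmoid (x s + b) - sigmoid (x s + a))" .
    from mult_left_mono[OF this, of "w s"] show ?thesis
      using w that by (simp add: algebra_simps)
  qed
  then have "(\<Sum>s\<in>T. exp (- K) * (w s * sigmoid' (x s + a)) * (b - a)\<^sup>2)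
      \<le> (\<Sum>s\<in>T. (b - a) * (w s * (sigmoid (x s + b) - sigmoid (x s + a))))"
    by (rule sum_mono)
  moreover have "(\<Sum>s\<in>T. exp (- K) * (w s * sigmoid' (x s + a)) * (b - a)\<^sup>2)
      = exp (- K) * (\<Sum>s\<in>T. w s * sigmoid' (x s + a)) * (b - a)\<^sup>2"
    by (simp add: sum_distrib_left sum_distrib_right mult.assoc)
  moreover have "(\<Sum>s\<in>T. (b - a) * (w s * (sigmoid (x s + b) - sigmoid (x s + a))))
      = (b - a) * (\<Sum>s\<in>T. w s * sigmoid (x s + b)) - (b - a) * (\<Sum>s\<in>T. w s * sigmoid (x s + a))"
    by (simp add: sum_distrib_left right_diff_distrib sum_subtractf)
  moreover have "exp (- K) * lam * (b - a)\<^sup>2 \<le> lam * (b - a)\<^sup>2"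
    using \<open>exp (- K) \<le> 1\<close> lam by (simp add: mult_right_mono mult_left_le_one_le)
  ultimately show ?thesis
    by (simp add: algebra_simps power2_eq_square)
qed

lemma info_le_exp_dist:
  assumes w: "\<forall>s\<in>T. 0 \<le> w s" and lam: "0 \<le> lam"
  shows "lam + (\<Sum>s\<in>T. w s * sigmoid' (x s + a)) \<le> exp \<bar>a - b\<bar> * (lam + (\<Sum>s\<in>T. w s * sigmoid' (x s + b)))"
proof -
  have "w s * sigmoid' (x s + a) \<le> exp \<bar>a - b\<bar> * (w s * sigmoid' (x s + b))" if "s \<in> T" for s
  proof -
    have "sigmoid' (x s + a) \<le> exp \<bar>a - b\<bar> * sigmoid' (x s + b)"
      using sigmoid'_ge_exp_neg_dist[of "x s + b" "x s + a"]
      by (simp add: exp_minus field_simps abs_minus_commute)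
    then show ?thesis
      using w that by (simp add: mult_left_mono mult.left_commute)
  qed
  then have "(\<Sum>s\<in>T. w s * sigmoid' (x s + a)) \<le> exp \<bar>a - b\<bar> * (\<Sum>s\<in>T. w s * sigmoid' (x s + b))"
    by (simp add: sum_distrib_left sum_mono)
  moreover have "lam \<le> exp \<bar>a - b\<bar> * lam"
    using mult_right_mono[of 1 "exp \<bar>a - b\<bar>" lam] lam by simp
  ultimately show ?thesis
    by (simp add: distrib_left)
qed

lemma clamped_mle_error_le:
  assumes w: "\<forall>s\<in>T. 0 \<le> w s" and lam: "0 \<le> lam" and mus: "\<bar>mus\<bar> \<le> r"
    and foc: "(\<Sum>s\<in>T. w s * (y s - sigmoid (x s + m))) = lam * m"
  defines "muh \<equiv> max (- r) (min r m)"
  shows "exp (- (2 * r)) * (lam + (\<Sum>s\<in>T. w s * sigmoid' (x s + muh))) * \<bar>muh - mus\<bar>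
           \<le> \<bar>\<Sum>s\<in>T. w s * (y s - sigmoid (x s + mus))\<bar> + lam * r"
proof -
  define G where "G z = lam * z + (\<Sum>s\<in>T. w s * sigmoid (x s + z))" for z
  define S where "S = (\<Sum>s\<in>T. w s * (y s - sigmoid (x s + mus)))"
  define Hh where "Hh = lam + (\<Sum>s\<in>T. w s * sigmoid' (x s + muh))"
  have "mono G"
    unfolding G_def using w lam by (intro monoI add_mono mult_left_mono sum_mono sigmoid_mono) auto
  have "G m - G mus = S - lam * mus"
    using foc by (simp add: G_def S_def sum_subtractf right_diff_distrib algebra_simps)
  moreover have "\<bar>lam * mus\<bar> \<le> lam * r"
    using mus lam by (simp add: abs_mult mult_left_mono)
  ultimately have G: "\<bar>G m - G mus\<bar> \<le> \<bar>S\<bar> + lam * r"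
    using abs_triangle_ineq4[of S "lam * mus"] by linarith
  have "exp (- (2 * r)) * Hh * \<bar>muh - mus\<bar>\<^sup>2 \<le> (mus - muh) * (G mus - G muh)"
    using sum_sigmoid_increment_ge[OF w lam, of mus muh "2 * r" x] mus
    by (simp add: G_def Hh_def muh_def abs_minus_commute)
  also have "\<dots> = (muh - mus) * (G muh - G mus)"
    by (simp add: algebra_simps)
  also have "\<dots> \<le> \<bar>muh - mus\<bar> * \<bar>G muh - G mus\<bar>"
    by (metis abs_ge_self abs_mult)
  also have "\<dots> \<le> \<bar>muh - mus\<bar> * (\<bar>S\<bar> + lam * r)"
    using mono_clamp_dist_le[OF \<open>mono G\<close> mus, of m] G by (intro mult_left_mono) (auto simp: muh_def)
  finally have "\<bar>muh - mus\<bar> * (exp (- (2 * r)) * Hh * \<bar>muh - mus\<bar>) \<le> \<bar>muh - mus\<bar> * (\<bar>S\<bar> + lam * r)"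
    by (simp add: power2_eq_square mult_ac)
  then show ?thesis
    using lam mus by (cases "muh = mus") (auto simp: S_def Hh_def mult_le_cancel_left_pos)
qed

lemma error_le_of_info_bounds:
  assumes lam: "0 < lam" and r: "0 \<le> r" and \<delta>: "0 < \<delta>" "\<delta> \<le> 2"
    and Hh: "lam \<le> Hh" and Hs: "lam \<le> Hs" "Hs \<le> exp (2 * r) * Hh"
    and S: "\<bar>S\<bar> \<le> conf_radius lam \<delta> Hs"
    and err: "exp (- (2 * r)) * Hh * D \<le> \<bar>S\<bar> + lam * r"
  shows "D \<le> exp (3 * r) / sqrt Hh * (sqrt lam / 2 + 2 / sqrt lam * (r + ln (2 * sqrt Hh / (\<delta> * sqrt lam))))
            + exp (2 * r) * lam * r / Hh"
proof -
  define B where "B = sqrt lam / 2 + 2 / sqrt lam * (r + ln (2 * sqrt Hh / (\<delta> * sqrt lam)))"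
  have Hh0: "0 < Hh" using lam Hh by linarith
  have "\<bar>S\<bar> \<le> conf_radius lam \<delta> (exp (2 * r) * Hh)"
    using S conf_radius_mono[OF lam(1) Hs \<delta>] by linarith
  also have "\<dots> = exp r * sqrt Hh * B"
    unfolding B_def by (rule conf_radius_exp_scale[OF lam(1) Hh0 \<delta>(1)])
  finally have SB: "\<bar>S\<bar> \<le> exp r * sqrt Hh * B" .
  have "Hh * D \<le> exp (2 * r) * (\<bar>S\<bar> + lam * r)"
    using mult_left_mono[OF err, of "exp (2 * r)"] by (simp add: exp_minus field_simps)
  also have "\<dots> \<le> exp (2 * r) * (exp r * sqrt Hh * B + lam * r)"
    using SB by simp
  finally have "D \<le> exp (2 * r) * (exp r * sqrt Hh * B + lam * r) / Hh"
    using Hh0 by (simp add: field_simps)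
  also have "\<dots> = exp (3 * r) / sqrt Hh * B + exp (2 * r) * lam * r / Hh"
  proof -
    have "exp (2 * r) * exp r = exp (3 * r)" by (simp flip: exp_add)
    moreover have "sqrt Hh / Hh = 1 / sqrt Hh"
      using Hh0 by (simp add: field_simps)
    ultimately show ?thesis
      using Hh0 by (simp add: field_simps)
  qed
  finally show ?thesis
    unfolding B_def .
qed

section \<open>The patient model\<close>

lemma action_set_indicator_basis_vec:
  assumes "v \<in> action_set M"
  shows "(if v = basis_vec i then 1 else 0) = v i"
proof (cases "v = basis_vec i")
  case False
  have "{j. v j \<noteq> 0} \<subseteq> {1..M}"
    using assms by (auto simp: action_set_def)
  then have fin: "finite {j. v j \<noteq> 0}"
    by (rule finite_subset) simp
  have "v i \<noteq> 1"
  proof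
    assume vi: "v i = 1"
    have "v j = 0" if "j \<noteq> i" for j
    proof (rule ccontr)
      assume "v j \<noteq> 0"
      then have "card {i, j} \<le> card {j. v j \<noteq> 0}"
        using vi fin by (intro card_mono) auto
      then show False
        using that assms by (auto simp: action_set_def)
    qed
    then have "v = basis_vec i"
      using vi by (auto simp: basis_vec_def)
    with False show False ..
  qed
  then show ?thesis
    using False assms by (auto simp: action_set_def)
qed (simp add: basis_vec_def)

lemma mu_hat_error_le_alpha_mu:
  fixes xs :: "nat \<Rightarrow> real" and us ds :: "nat \<Rightarrow> nat \<Rightarrow> real"
  assumes M: "1 \<le> M" and mubar: "0 < mubar" and lam: "0 < lam" and \<delta>: "0 < \<delta>" "\<delta> < 1"
    and mus: "\<bar>mus\<bar> \<le> mubar"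
    and us: "\<And>s. s \<in> {1..<t} \<Longrightarrow> us s \<in> action_set M"
    and ds: "\<And>s. s \<in> {1..<t} \<Longrightarrow> ds s i \<in> {0, 1}"
    and conc: "\<bar>\<Sum>s\<in>{1..<t}. us s i * (ds s i - sigmoid (xs s + mus))\<bar>
      \<le> conf_radius lam (\<delta> / M) (lam + (\<Sum>s\<in>{1..<t}. us s i * sigmoid' (xs s + mus)))"
  shows "\<bar>mu_hat mubar lam xs us ds i t - mus\<bar> \<le> alpha_mu M mubar lam \<delta> xs us ds i t"
proof -
  define w where "w s = (if us s = basis_vec i then 1 else 0 :: real)" for s
  define mle where "mle = mu_mle lam xs us ds i t"
  define muh where "muh = max (- mubar) (min mubar mle)"
  define Hh where "Hh = lam + (\<Sum>s\<in>{1..<t}. w s * sigmoid' (xs s + muh))"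
  define Hs where "Hs = lam + (\<Sum>s\<in>{1..<t}. w s * sigmoid' (xs s + mus))"
  define S where "S = (\<Sum>s\<in>{1..<t}. w s * (ds s i - sigmoid (xs s + mus)))"
  have w: "\<forall>s\<in>{1..<t}. 0 \<le> w s" by (simp add: w_def)
  have "(\<Sum>s\<in>{1..<t}. w s * (ds s i - sigmoid (xs s + mle))) = lam * mle"
    unfolding w_def mle_def using lam ds by (intro mu_mle_first_order) fastforce+
  then have err: "exp (- (2 * mubar)) * Hh * \<bar>muh - mus\<bar> \<le> \<bar>S\<bar> + lam * mubar"
    unfolding Hh_def S_def muh_def using w lam mus by (intro clamped_mle_error_le) auto
  have info: "lam \<le> Hh" "lam \<le> Hs"
    unfolding Hh_def Hs_def using w sigmoid'_pos[THEN less_imp_le]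
    by (auto intro!: sum_nonneg mult_nonneg_nonneg)
  have "Hs \<le> exp \<bar>mus - muh\<bar> * Hh"
    unfolding Hs_def Hh_def using w lam by (intro info_le_exp_dist) auto
  also have "\<dots> \<le> exp (2 * mubar) * Hh"
    using mus info lam by (intro mult_right_mono) (auto simp: muh_def)
  finally have HsHh: "Hs \<le> exp (2 * mubar) * Hh" .
  have "w s = us s i" if "s \<in> {1..<t}" for s
    unfolding w_def using action_set_indicator_basis_vec[OF us[OF that]] .
  then have "S = (\<Sum>s\<in>{1..<t}. us s i * (ds s i - sigmoid (xs s + mus)))"
    "Hs = lam + (\<Sum>s\<in>{1..<t}. us s i * sigmoid' (xs s + mus))"
    unfolding S_def Hs_def by (auto intro!: sum.cong)
  with conc have S: "\<bar>S\<bar> \<le> conf_radius lam (\<delta> / M) Hs"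
    by simp
  have bound: "\<bar>muh - mus\<bar> \<le> exp (3 * mubar) / sqrt Hh
      * (sqrt lam / 2 + 2 / sqrt lam * (mubar + ln (2 * sqrt Hh / (\<delta> / M * sqrt lam))))
      + exp (2 * mubar) * lam * mubar / Hh"
  proof (rule error_le_of_info_bounds[OF lam _ _ _ info HsHh S err])
    have "1 \<le> real M" using M by simp
    then show "0 < \<delta> / M" "\<delta> / M \<le> 2"
      using \<delta> by (simp_all add: field_simps)
  qed (use mubar in simp)
  have "2 * sqrt Hh / (\<delta> / M * sqrt lam) = 2 * real M * sqrt Hh / (\<delta> * sqrt lam)"
    using M by simp
  moreover have "H_info lam xs us i t muh = Hh"
    by (simp add: H_info_def Hh_def w_def)
  ultimately show ?thesis
    using bound by (simp only: alpha_mu_def Let_def mu_hat_def flip: mle_def muh_def)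
qed

lemma (in prob_space) finite_union_bound:
  fixes \<epsilon> :: real
  assumes I: "finite I"
    and bad: "\<And>i. i \<in> I \<Longrightarrow> \<exists>B\<in>events. prob B \<le> \<epsilon> \<and> (\<forall>\<omega>\<in>space M - B. Q i \<omega>)"
  shows "\<exists>E\<in>events. 1 - real (card I) * \<epsilon> \<le> prob E \<and> (\<forall>\<omega>\<in>E. \<forall>i\<in>I. Q i \<omega>)"
proof -
  obtain B where B: "\<And>i. i \<in> I \<Longrightarrow> B i \<in> events \<and> prob (B i) \<le> \<epsilon> \<and> (\<forall>\<omega>\<in>space M - B i. Q i \<omega>)"
    using bad by metis
  let ?U = "\<Union>i\<in>I. B i"
  have U: "?U \<in> events"
    using B I by auto
  have "prob ?U \<le> (\<Sum>i\<in>I. prob (B i))"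
    using B I by (intro finite_measure_subadditive_finite) auto
  also have "\<dots> \<le> real (card I) * \<epsilon>"
    using B by (intro sum_bounded_above) auto
  finally have "1 - real (card I) * \<epsilon> \<le> prob (space M - ?U)"
    using prob_compl[OF U] by linarith
  moreover have "\<forall>\<omega>\<in>space M - ?U. \<forall>i\<in>I. Q i \<omega>"
    using B by blast
  ultimately show ?thesis
    using U by blast
qed

locale patient_model = prob_space P for P :: "'w measure" +
  fixes F G :: "nat \<Rightarrow> 'w measure"
    and x :: "nat \<Rightarrow> 'w \<Rightarrow> real" and u d :: "nat \<Rightarrow> 'w \<Rightarrow> nat \<Rightarrow> real"
    and M :: nat and mu_star :: "nat \<Rightarrow> real"
  assumes F_sub: "\<forall>t\<ge>1. subalgebra P (F t)" and G_sub: "\<forall>t\<ge>1. subalgebra P (G t)"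
    and F_G: "\<forall>t\<ge>1. sets (F t) \<subseteq> sets (G t)" and G_F: "\<forall>t\<ge>1. sets (G t) \<subseteq> sets (F (Suc t))"
    and x_meas: "\<forall>t\<ge>1. x t \<in> borel_measurable (F t)"
    and u_meas: "\<forall>t\<ge>1. \<forall>i. (\<lambda>\<omega>. u t \<omega> i) \<in> borel_measurable (F t)"
    and d_meas: "\<forall>t\<ge>1. \<forall>i. (\<lambda>\<omega>. d t \<omega> i) \<in> borel_measurable (G t)"
    and u_set: "\<forall>t\<ge>1. \<forall>\<omega>\<in>space P. u t \<omega> \<in> action_set M"
    and d_vals: "\<forall>t\<ge>1. \<forall>\<omega>\<in>space P. \<forall>i. d t \<omega> i \<in> {0, 1}"
    and adherence: "\<forall>t\<ge>1. \<forall>i\<in>{1..M}. \<forall>A\<in>sets (F t).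
      measure P (A \<inter> {\<omega>\<in>space P. d t \<omega> i = 1}) = (LINT \<omega>:A|P. u t \<omega> i * sigmoid (x t \<omega> + mu_star i))"
begin

lemma adapted_bernoulli_treatment:
  assumes i: "i \<in> {1..M}"
  shows "adapted_bernoulli P F (\<lambda>t \<omega>. u t \<omega> i) (\<lambda>t \<omega>. sigmoid (x t \<omega> + mu_star i)) (\<lambda>t \<omega>. d t \<omega> i)"
proof (intro adapted_bernoulli.intro adapted_bernoulli_axioms.intro filtered_prob_space.intro
    filtered_prob_space_axioms.intro prob_space_axioms)
  fix t :: nat assume t: "1 \<le> t"
  then show "subalgebra P (F t)" "sets (F t) \<subseteq> sets (F (Suc t))"
    using F_sub F_G G_F by (blast intro: subset_trans)+
  have [measurable]: "x t \<in> borel_measurable (F t)"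
    using x_meas t by simp
  show "(\<lambda>\<omega>. u t \<omega> i) \<in> borel_measurable (F t)"
    using u_meas t by simp
  show "(\<lambda>\<omega>. sigmoid (x t \<omega> + mu_star i)) \<in> borel_measurable (F t)"
    unfolding sigmoid_def by measurable
  have "subalgebra (F (Suc t)) (G t)"
    using F_sub G_sub G_F t by (auto simp: subalgebra_def)
  then show "(\<lambda>\<omega>. d t \<omega> i) \<in> borel_measurable (F (Suc t))"
    using d_meas t by (auto intro: measurable_from_subalg)
next
  fix t :: nat and \<omega> assume "1 \<le> t" "\<omega> \<in> space P"
  then show "u t \<omega> i \<in> {0, 1} \<and> 0 \<le> sigmoid (x t \<omega> + mu_star i) \<and> sigmoid (x t \<omega> + mu_star i) \<le> 1
      \<and> d t \<omega> i \<in> {0, 1}"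
    using u_set d_vals sigmoid_pos sigmoid_less_1 by (auto simp: action_set_def less_imp_le)
next
  fix t :: nat and A assume "1 \<le> t" "A \<in> sets (F t)"
  then show "prob (A \<inter> {\<omega> \<in> space P. d t \<omega> i = 1}) = (LINT \<omega>:A|P. u t \<omega> i * sigmoid (x t \<omega> + mu_star i))"
    using adherence i by simp
qed

theorem adherence_concentration:
  assumes M: "1 \<le> M" and lam: "0 < lam" and \<delta>: "0 < \<delta>"
  shows "\<exists>E\<in>events. 1 - \<delta> \<le> prob E \<and> (\<forall>\<omega>\<in>E. \<forall>i\<in>{1..M}. \<forall>t\<ge>1.
    \<bar>\<Sum>s\<in>{1..<t}. u s \<omega> i * (d s \<omega> i - sigmoid (x s \<omega> + mu_star i))\<bar>
      \<le> conf_radius lam (\<delta> / M) (lam + (\<Sum>s\<in>{1..<t}. u s \<omega> i * sigmoid' (x s \<omega> + mu_star i))))"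
proof -
  have bad: "\<exists>B\<in>events. prob B \<le> \<delta> / M \<and> (\<forall>\<omega>\<in>space P - B. \<forall>t\<ge>1.
      \<bar>\<Sum>s\<in>{1..<t}. u s \<omega> i * (d s \<omega> i - sigmoid (x s \<omega> + mu_star i))\<bar>
        \<le> conf_radius lam (\<delta> / M) (lam + (\<Sum>s\<in>{1..<t}. u s \<omega> i * sigmoid' (x s \<omega> + mu_star i))))"
    if "i \<in> {1..M}" for i
  proof -
    interpret adapted_bernoulli P F "\<lambda>t \<omega>. u t \<omega> i" "\<lambda>t \<omega>. sigmoid (x t \<omega> + mu_star i)" "\<lambda>t \<omega>. d t \<omega> i"
      using that by (rule adapted_bernoulli_treatment)
    show ?thesis
      using self_normalized_bound[OF lam, of "\<delta> / M"] \<delta> M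
      by (simp add: centered_sum_def variance_sum_def sigmoid'_def)
  qed
  from finite_union_bound[where I = "{1..M}", OF finite_atLeastAtMost bad] show ?thesis
    using M by simp
qed

end

theorem proposition5:
  fixes P :: "'w measure"
    and M :: nat
    and a abar bbar cbar mubar wbar sigma_s lam2 \<delta> :: real
    and b c mu_star :: "nat \<Rightarrow> real"
    and x w :: "nat \<Rightarrow> 'w \<Rightarrow> real"
    and u d :: "nat \<Rightarrow> 'w \<Rightarrow> nat \<Rightarrow> real"
    and F G :: "nat \<Rightarrow> 'w measure"
    and f :: "real \<Rightarrow> real"
  assumes prob: "prob_space P"
    and M_pos: "M \<ge> 1"
    (* parameters *)
    and abar: "0 < abar" "abar < 1" and a: "0 \<le> a" "a \<le> abar"
    and b: "\<forall>i\<in>{1..M}. \<bar>b i\<bar> \<le> bbar"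
    and c: "\<forall>i\<in>{1..M}. \<bar>c i\<bar> \<le> cbar"
    and mubar: "mubar > 0"
    and mu_star: "\<forall>i\<in>{1..M}. - mubar \<le> mu_star i \<and> mu_star i \<le> mubar"
    (* information structure: F t = history up to x_t, u_t (incl. independent randomisation);
       G t = F t together with d_t *)
    and F_sub: "\<forall>t\<ge>1. subalgebra P (F t)"
    and G_sub: "\<forall>t\<ge>1. subalgebra P (G t)"
    and F_G: "\<forall>t\<ge>1. sets (F t) \<subseteq> sets (G t)"
    and G_F: "\<forall>t\<ge>1. sets (G t) \<subseteq> sets (F (Suc t))"
    and x_meas: "\<forall>t\<ge>1. x t \<in> borel_measurable (F t)"
    and u_meas: "\<forall>t\<ge>1. \<forall>i. (\<lambda>\<omega>. u t \<omega> i) \<in> borel_measurable (F t)"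
    and d_meas: "\<forall>t\<ge>1. \<forall>i. (\<lambda>\<omega>. d t \<omega> i) \<in> borel_measurable (G t)"
    and w_meas: "\<forall>t\<ge>1. w t \<in> borel_measurable P"
    (* actions and adherence *)
    and u_set: "\<forall>t\<ge>1. \<forall>\<omega>\<in>space P. u t \<omega> \<in> action_set M"
    and d_vals: "\<forall>t\<ge>1. \<forall>\<omega>\<in>space P. \<forall>i. d t \<omega> i \<in> {0, 1}"
    and adherence: "\<forall>t\<ge>1. \<forall>i\<in>{1..M}. \<forall>A\<in>sets (F t).
        measure P (A \<inter> {\<omega>\<in>space P. d t \<omega> i = 1})
          = (LINT \<omega>:A|P. u t \<omega> i * sigmoid (x t \<omega> + mu_star i))"
    (* dynamics *)
    and dyn: "\<forall>t\<ge>1. \<forall>\<omega>\<in>space P. x (Suc t) \<omega> =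
        a * x t \<omega> + (\<Sum>i\<in>{1..M}. b i * u t \<omega> i) + (\<Sum>i\<in>{1..M}. c i * d t \<omega> i) + w t \<omega>"
    (* noise *)
    and w_indep: "\<forall>t\<ge>1. \<forall>A\<in>sets (G t). \<forall>B\<in>sets borel.
        measure P (A \<inter> (w t -` B \<inter> space P)) = measure P A * measure P (w t -` B \<inter> space P)"
    and w_iid: "prob_space.indep_vars P (\<lambda>_. borel) w {1..}"
    and w_ident: "\<forall>t\<ge>1. distr P borel (w t) = distr P borel (w 1)"
    and x1_dist: "distr P borel (x 1) = distr P borel (w 1)"
    and w_density: "distributed P lborel (w 1) (\<lambda>z. ennreal (f z))"
    and f_nonneg: "\<forall>z. 0 \<le> f z"
    and f_sym: "\<forall>z. f (- z) = f z"
    and f_logconc: "log_concave f"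
    and wbar: "wbar > 0" and w_bdd: "\<forall>t\<ge>1. \<forall>\<omega>\<in>space P. \<bar>w t \<omega>\<bar> \<le> wbar"
    and w_subg: "\<forall>l. (\<integral>\<omega>. exp (l * w 1 \<omega>) \<partial>P) \<le> exp (l\<^sup>2 * sigma_s\<^sup>2 / 2)"
    (* confidence parameters *)
    and lam2: "lam2 > 0"
    and delta: "0 < \<delta>" "\<delta> < 1"
  shows "\<exists>E\<in>sets P. measure P E \<ge> 1 - \<delta> \<and>
    (\<forall>\<omega>\<in>E. \<forall>t\<ge>1. \<forall>i\<in>{1..M}.
       \<bar>mu_hat mubar lam2 (\<lambda>s. x s \<omega>) (\<lambda>s. u s \<omega>) (\<lambda>s. d s \<omega>) i t - mu_star i\<bar>
         \<le> alpha_mu M mubar lam2 \<delta> (\<lambda>s. x s \<omega>) (\<lambda>s. u s \<omega>) (\<lambda>s. d s \<omega>) i t)"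
proof -
  interpret patient_model P F G x u d M mu_star
    using prob F_sub G_sub F_G G_F x_meas u_meas d_meas u_set d_vals adherence
    by (simp add: patient_model_def patient_model_axioms_def)
  obtain E where E: "E \<in> sets P" "1 - \<delta> \<le> measure P E"
    and conc: "\<forall>\<omega>\<in>E. \<forall>i\<in>{1..M}. \<forall>t\<ge>1.
      \<bar>\<Sum>s\<in>{1..<t}. u s \<omega> i * (d s \<omega> i - sigmoid (x s \<omega> + mu_star i))\<bar>
        \<le> conf_radius lam2 (\<delta> / M) (lam2 + (\<Sum>s\<in>{1..<t}. u s \<omega> i * sigmoid' (x s \<omega> + mu_star i)))"
    using adherence_concentration[OF M_pos lam2 delta(1)] by blast
  have "\<bar>mu_hat mubar lam2 (\<lambda>s. x s \<omega>) (\<lambda>s. u s \<omega>) (\<lambda>s. d s \<omega>) i t - mu_star i\<bar>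
      \<le> alpha_mu M mubar lam2 \<delta> (\<lambda>s. x s \<omega>) (\<lambda>s. u s \<omega>) (\<lambda>s. d s \<omega>) i t"
    if \<omega>: "\<omega> \<in> E" and t: "1 \<le> t" and i: "i \<in> {1..M}" for \<omega> t i
  proof (rule mu_hat_error_le_alpha_mu[OF M_pos mubar lam2 delta])
    show "\<bar>mu_star i\<bar> \<le> mubar"
      using bspec[OF mu_star i] by (simp add: abs_le_iff)
    show "u s \<omega> \<in> action_set M" "d s \<omega> i \<in> {0, 1}" if "s \<in> {1..<t}" for s
    proof -
      have "\<omega> \<in> space P" "1 \<le> s"
        using sets.sets_into_space[OF E(1)] \<omega> that by auto
      then show "u s \<omega> \<in> action_set M" "d s \<omega> i \<in> {0, 1}"
        using u_set d_vals by blast+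
    qed
    show "\<bar>\<Sum>s\<in>{1..<t}. u s \<omega> i * (d s \<omega> i - sigmoid (x s \<omega> + mu_star i))\<bar>
        \<le> conf_radius lam2 (\<delta> / M) (lam2 + (\<Sum>s\<in>{1..<t}. u s \<omega> i * sigmoid' (x s \<omega> + mu_star i)))"
      using conc \<omega> t i by blast
  qed
  then show ?thesis
    using E by blast
qed

end
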